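(* Let $\mathcal{C}$ be a d-category and $f:Y\to X$ a map of $\mathcal{C}$-presheaves. The following are equivalent: (1) $f$ is future open; (2) for every path $\alpha:\mathcal I\to\mathsf{E}X$ and every element $y$ of $Y$ with $\mathsf{E}(f)(y)=\alpha(\bot_{\mathcal I})$ there is a path $\beta:\mathcal I\to\mathsf{E}Y$ with $\beta(\bot_{\mathcal I})=y$ and $\mathsf{E}(f)\circ\beta=\alpha$; (3) for every track object $\Gamma$, every presheaf map $\boldsymbol\alpha:\Gamma\to X$ and every $y\in Y[\mathrm{src}\Gamma]$ with $f(y)=\boldsymbol\alpha(\bot_\Gamma)$ there is a presheaf map $\boldsymbol\beta:\Gamma\to Y$ with $\boldsymbol\beta(\bot_\Gamma)=y$ and $f\circ\boldsymbol\beta=\boldsymbol\alpha$; (4) for all track objects $\Gamma,\Delta$ with $\mathrm{tgt}\Gamma=\mathrm{src}\Delta$, letting $j:\Gamma\to\Gamma*\Delta$ be the canonical map, for all presheaf maps $\boldsymbol\gamma:\Gamma\to Y$ and $\boldsymbol\alpha:\Gamma*\Delta\to X$ with $\boldsymbol\alpha\circ j=f\circ\boldsymbol\gamma$ there is $\boldsymbol\beta:\Gamma*\Delta\to Y$ with $\boldsymbol\beta\circ j=\boldsymbol\gamma$ and $f\circ\boldsymbol\beta=\boldsymbol\alpha$.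
   Context: A d-category is a small category $\mathcal{C}$ with wide subcategories $\mathcal{C}^+$ (formorphisms) and $\mathcal{C}^-$ (backmorphisms) such that an invertible $\varphi$ is in $\mathcal{C}^+$ iff $\varphi^{-1}\in\mathcal{C}^-$; d-functors preserve both. A $\mathcal{C}$-presheaf is a functor $X:\mathcal{C}^{op}\to\mathbf{Set}$; $\mathsf{E}X$ is its category of elements (objects $(U,x)$, $x\in X[U]$; morphisms $(V,y)\to(U,x)$ the $\varphi:V\to U$ with $X[\varphi](x)=y$), a d-category where a morphism is a for-/backmorphism iff its image in $\mathcal{C}$ is; $\mathsf{E}(f)(U,y)=(U,f(y))$. A map $f:Y\to X$ is future open if for every $\varphi\in\mathcal{C}^+(V,U)$, $y\in Y[V]$, $x\in X[U]$ with $X[\varphi](x)=f(y)$ there is $\bar y\in Y[U]$ with $Y[\varphi](\bar y)=y$ and $f(\bar y)=x$. A linear category is a bipointed d-category isomorphic to a finite (possibly empty) concatenation (gluing $\top$ to $\bot$) of $\mathbf S$ (formorphism $\bot\to\top$), $\mathbf T$ (backmorphism $\top\to\bot$), $\mathbf I$ (inverse pair); a path in a d-category $\mathcal D$ is a d-functor from a linear category to $\mathcal D$. The track object of a path $\omega:\mathcal I\to\mathcal{C}$ is $\operatorname{colim}_i\mathcal{C}(-,\omega(i))$ with single start element $\bot$ the image of $\mathrm{id}_{\omega(\bot)}$ (over $\mathrm{src}=\omega(\bot)$) and single accept element $\top$ the image of $\mathrm{id}_{\omega(\top)}$ (over $\mathrm{tgt}=\omega(\top)$); a track object is such an object up to isomorphism.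 For track objects with $\mathrm{tgt}\Gamma=\mathrm{src}\Delta=U$, $\Gamma*\Delta$ is the pushout of $\Gamma\xleftarrow{\top_\Gamma}\mathcal{C}(-,U)\xrightarrow{\bot_\Delta}\Delta$ (elements viewed as maps from representables via Yoneda), with start element from $\Gamma$ and accept from $\Delta$. *)

theory Defs
  imports Main
begin

text \<open>A small category: object set, morphism set, domain, codomain, identities and
  composition (Cmp C g f is g after f).\<close>
record ('o, 'm) cat =
  Ob  :: "'o set"
  Mor :: "'m set"
  Dm  :: "'m \<Rightarrow> 'o"
  Cd  :: "'m \<Rightarrow> 'o"
  Idm :: "'o \<Rightarrow> 'm"
  Cmp :: "'m \<Rightarrow> 'm \<Rightarrow> 'm"

record ('o, 'm) dcat = "('o, 'm) cat" +
  Fwd :: "'m set"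
  Bwd :: "'m set"

definition category :: "('o, 'm, 'z) cat_scheme \<Rightarrow> bool" where
  "category C \<longleftrightarrow>
     (\<forall>U\<in>Ob C. Idm C U \<in> Mor C \<and> Dm C (Idm C U) = U \<and> Cd C (Idm C U) = U) \<and>
     (\<forall>f\<in>Mor C. Dm C f \<in> Ob C \<and> Cd C f \<in> Ob C) \<and>
     (\<forall>f\<in>Mor C. \<forall>g\<in>Mor C. Cd C f = Dm C g \<longrightarrow>
        Cmp C g f \<in> Mor C \<and> Dm C (Cmp C g f) = Dm C f \<and> Cd C (Cmp C g f) = Cd C g) \<and>
     (\<forall>f\<in>Mor C. Cmp C f (Idm C (Dm C f)) = f \<and> Cmp C (Idm C (Cd C f)) f = f) \<and>
     (\<forall>f\<in>Mor C. \<forall>g\<in>Mor C. \<forall>h\<in>Mor C. Cd C f = Dm C g \<longrightarrow> Cd C g = Dm C h \<longrightarrow>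
        Cmp C h (Cmp C g f) = Cmp C (Cmp C h g) f)"

definition inverse_pair :: "('o, 'm, 'z) cat_scheme \<Rightarrow> 'm \<Rightarrow> 'm \<Rightarrow> bool" where
  "inverse_pair C f g \<longleftrightarrow> f \<in> Mor C \<and> g \<in> Mor C \<and> Dm C g = Cd C f \<and> Cd C g = Dm C f \<and>
     Cmp C g f = Idm C (Dm C f) \<and> Cmp C f g = Idm C (Cd C f)"

definition wide_subcat :: "('o, 'm, 'z) cat_scheme \<Rightarrow> 'm set \<Rightarrow> bool" where
  "wide_subcat C M \<longleftrightarrow> M \<subseteq> Mor C \<and> (\<forall>U\<in>Ob C. Idm C U \<in> M) \<and>
     (\<forall>f\<in>M. \<forall>g\<in>M. Cd C f = Dm C g \<longrightarrow> Cmp C g f \<in> M)"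

definition dcategory :: "('o, 'm) dcat \<Rightarrow> bool" where
  "dcategory C \<longleftrightarrow> category C \<and> wide_subcat C (Fwd C) \<and> wide_subcat C (Bwd C) \<and>
     (\<forall>f g. inverse_pair C f g \<longrightarrow> (f \<in> Fwd C \<longleftrightarrow> g \<in> Bwd C))"

definition dfunctor :: "('a, 'b) dcat \<Rightarrow> ('o, 'm) dcat \<Rightarrow> ('a \<Rightarrow> 'o) \<Rightarrow> ('b \<Rightarrow> 'm) \<Rightarrow> bool" where
  "dfunctor A D Fo Fm \<longleftrightarrow>
     (\<forall>U\<in>Ob A. Fo U \<in> Ob D) \<and>
     (\<forall>f\<in>Mor A. Fm f \<in> Mor D \<and> Dm D (Fm f) = Fo (Dm A f) \<and> Cd D (Fm f) = Fo (Cd A f)) \<and>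
     (\<forall>U\<in>Ob A. Fm (Idm A U) = Idm D (Fo U)) \<and>
     (\<forall>f\<in>Mor A. \<forall>g\<in>Mor A. Cd A f = Dm A g \<longrightarrow> Fm (Cmp A g f) = Cmp D (Fm g) (Fm f)) \<and>
     (\<forall>f\<in>Fwd A. Fm f \<in> Fwd D) \<and> (\<forall>f\<in>Bwd A. Fm f \<in> Bwd D)"

datatype letter = S | T | I

text \<open>The concatenation of the letters ws (S: formorphism bot -> top, T: backmorphism
  top -> bot, I: inverse pair, both of whose arrows are for- and backmorphisms).
  Objects 0..length ws, the k-th letter glued between k and k+1, bot = 0, top = length ws.
  The glued category is thin; (i,j) is the unique morphism i -> j when it exists.\<close>
definition lin_mor :: "letter list \<Rightarrow> (nat \<times> nat) set" where
  "lin_mor ws = {(i, j). i \<le> length ws \<and> j \<le> length ws \<and>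
     (if i \<le> j then (\<forall>k. i \<le> k \<and> k < j \<longrightarrow> ws ! k \<noteq> T)
               else (\<forall>k. j \<le> k \<and> k < i \<longrightarrow> ws ! k \<noteq> S))}"

definition all_I :: "letter list \<Rightarrow> nat \<Rightarrow> nat \<Rightarrow> bool" where
  "all_I ws a b \<longleftrightarrow> (\<forall>k. a \<le> k \<and> k < b \<longrightarrow> ws ! k = I)"

definition Lin :: "letter list \<Rightarrow> (nat, nat \<times> nat) dcat" where
  "Lin ws = \<lparr> Ob = {0..length ws}, Mor = lin_mor ws, Dm = fst, Cd = snd,
      Idm = (\<lambda>i. (i, i)), Cmp = (\<lambda>g f. (fst f, snd g)),
      Fwd = {(i, j) \<in> lin_mor ws. i \<le> j \<or> all_I ws j i},
      Bwd = {(i, j) \<in> lin_mor ws. j \<le> i \<or> all_I ws i j} \<rparr>"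

definition path :: "('o, 'm) dcat \<Rightarrow> letter list \<Rightarrow> (nat \<Rightarrow> 'o) \<Rightarrow> (nat \<times> nat \<Rightarrow> 'm) \<Rightarrow> bool" where
  "path D ws Fo Fm \<longleftrightarrow> dfunctor (Lin ws) D Fo Fm"

text \<open>A C-presheaf: sets X[U] and restriction maps X[phi] : X[Cd phi] -> X[Dm phi].\<close>
record ('o, 'm, 'e) psh =
  Elt :: "'o \<Rightarrow> 'e set"
  Act :: "'m \<Rightarrow> 'e \<Rightarrow> 'e"

definition presheaf :: "('o, 'm) dcat \<Rightarrow> ('o, 'm, 'e) psh \<Rightarrow> bool" where
  "presheaf C X \<longleftrightarrow>
     (\<forall>\<phi>\<in>Mor C. \<forall>x\<in>Elt X (Cd C \<phi>). Act X \<phi> x \<in> Elt X (Dm C \<phi>)) \<and>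
     (\<forall>U\<in>Ob C. \<forall>x\<in>Elt X U. Act X (Idm C U) x = x) \<and>
     (\<forall>\<phi>\<in>Mor C. \<forall>\<psi>\<in>Mor C. Cd C \<phi> = Dm C \<psi> \<longrightarrow>
        (\<forall>x\<in>Elt X (Cd C \<psi>). Act X (Cmp C \<psi> \<phi>) x = Act X \<phi> (Act X \<psi> x)))"

definition psh_map :: "('o, 'm) dcat \<Rightarrow> ('o, 'm, 'e) psh \<Rightarrow> ('o, 'm, 'e2) psh \<Rightarrow>
    ('o \<Rightarrow> 'e \<Rightarrow> 'e2) \<Rightarrow> bool" where
  "psh_map C Y X f \<longleftrightarrow>
     (\<forall>U\<in>Ob C. \<forall>y\<in>Elt Y U. f U y \<in> Elt X U) \<and>
     (\<forall>\<phi>\<in>Mor C. \<forall>y\<in>Elt Y (Cd C \<phi>). f (Dm C \<phi>) (Act Y \<phi> y) = Act X \<phi> (f (Cd C \<phi>) y))"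

definition future_open :: "('o, 'm) dcat \<Rightarrow> ('o, 'm, 'y) psh \<Rightarrow> ('o, 'm, 'x) psh \<Rightarrow>
    ('o \<Rightarrow> 'y \<Rightarrow> 'x) \<Rightarrow> bool" where
  "future_open C Y X f \<longleftrightarrow>
     (\<forall>\<phi>\<in>Fwd C. \<forall>y\<in>Elt Y (Dm C \<phi>). \<forall>x\<in>Elt X (Cd C \<phi>).
        Act X \<phi> x = f (Dm C \<phi>) y \<longrightarrow>
        (\<exists>y'\<in>Elt Y (Cd C \<phi>). Act Y \<phi> y' = y \<and> f (Cd C \<phi>) y' = x))"

text \<open>Objects (U,x) with x in X[U]; the morphism (V, X[phi] x) -> (U, x) over phi is
  represented by the pair (phi, x).\<close>
definition elcat :: "('o, 'm) dcat \<Rightarrow> ('o, 'm, 'x) psh \<Rightarrow> ('o \<times> 'x, 'm \<times> 'x) dcat" where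
  "elcat C X = \<lparr> Ob = {(U, x). U \<in> Ob C \<and> x \<in> Elt X U},
      Mor = {(\<phi>, x). \<phi> \<in> Mor C \<and> x \<in> Elt X (Cd C \<phi>)},
      Dm = (\<lambda>(\<phi>, x). (Dm C \<phi>, Act X \<phi> x)),
      Cd = (\<lambda>(\<phi>, x). (Cd C \<phi>, x)),
      Idm = (\<lambda>(U, x). (Idm C U, x)),
      Cmp = (\<lambda>(\<psi>, x') (\<phi>, x). (Cmp C \<psi> \<phi>, x')),
      Fwd = {(\<phi>, x). \<phi> \<in> Fwd C \<and> x \<in> Elt X (Cd C \<phi>)},
      Bwd = {(\<phi>, x). \<phi> \<in> Bwd C \<and> x \<in> Elt X (Cd C \<phi>)} \<rparr>"

definition Ef_ob :: "('o \<Rightarrow> 'y \<Rightarrow> 'x) \<Rightarrow> 'o \<times> 'y \<Rightarrow> 'o \<times> 'x" where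
  "Ef_ob f = (\<lambda>(U, y). (U, f U y))"

definition Ef_mor :: "('o, 'm) dcat \<Rightarrow> ('o \<Rightarrow> 'y \<Rightarrow> 'x) \<Rightarrow> 'm \<times> 'y \<Rightarrow> 'm \<times> 'x" where
  "Ef_mor C f = (\<lambda>(\<phi>, y). (\<phi>, f (Cd C \<phi>) y))"

section \<open>Track objects: colim_i C(-, omega i)\<close>

definition track_carrier :: "('o, 'm) dcat \<Rightarrow> letter list \<Rightarrow> (nat \<Rightarrow> 'o) \<Rightarrow> 'o \<Rightarrow> (nat \<times> 'm) set" where
  "track_carrier C ws Wo U = {(i, \<psi>). i \<le> length ws \<and> \<psi> \<in> Mor C \<and> Dm C \<psi> = U \<and> Cd C \<psi> = Wo i}"

definition track_step :: "('o, 'm) dcat \<Rightarrow> letter list \<Rightarrow> (nat \<Rightarrow> 'o) \<Rightarrow> (nat \<times> nat \<Rightarrow> 'm) \<Rightarrow>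
    'o \<Rightarrow> nat \<times> 'm \<Rightarrow> nat \<times> 'm \<Rightarrow> bool" where
  "track_step C ws Wo Wm U p q \<longleftrightarrow> p \<in> track_carrier C ws Wo U \<and> q \<in> track_carrier C ws Wo U \<and>
     (\<exists>i j \<psi>. (i, j) \<in> Mor (Lin ws) \<and> p = (i, \<psi>) \<and> q = (j, Cmp C (Wm (i, j)) \<psi>))"

definition track_cls :: "('o, 'm) dcat \<Rightarrow> letter list \<Rightarrow> (nat \<Rightarrow> 'o) \<Rightarrow> (nat \<times> nat \<Rightarrow> 'm) \<Rightarrow>
    'o \<Rightarrow> nat \<times> 'm \<Rightarrow> (nat \<times> 'm) set" where
  "track_cls C ws Wo Wm U p =
     {q. (\<lambda>a b. track_step C ws Wo Wm U a b \<or> track_step C ws Wo Wm U b a)\<^sup>*\<^sup>* p q}"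

definition track :: "('o, 'm) dcat \<Rightarrow> letter list \<Rightarrow> (nat \<Rightarrow> 'o) \<Rightarrow> (nat \<times> nat \<Rightarrow> 'm) \<Rightarrow>
    ('o, 'm, (nat \<times> 'm) set) psh" where
  "track C ws Wo Wm = \<lparr> Elt = (\<lambda>U. track_cls C ws Wo Wm U ` track_carrier C ws Wo U),
      Act = (\<lambda>\<phi> c. case (SOME p. p \<in> c) of (i, \<psi>) \<Rightarrow>
                track_cls C ws Wo Wm (Dm C \<phi>) (i, Cmp C \<psi> \<phi>)) \<rparr>"

definition track_bot :: "('o, 'm) dcat \<Rightarrow> letter list \<Rightarrow> (nat \<Rightarrow> 'o) \<Rightarrow> (nat \<times> nat \<Rightarrow> 'm) \<Rightarrow> (nat \<times> 'm) set" where
  "track_bot C ws Wo Wm = track_cls C ws Wo Wm (Wo 0) (0, Idm C (Wo 0))"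

definition track_top :: "('o, 'm) dcat \<Rightarrow> letter list \<Rightarrow> (nat \<Rightarrow> 'o) \<Rightarrow> (nat \<times> nat \<Rightarrow> 'm) \<Rightarrow> (nat \<times> 'm) set" where
  "track_top C ws Wo Wm =
     track_cls C ws Wo Wm (Wo (length ws)) (length ws, Idm C (Wo (length ws)))"

section \<open>Pushout A <- C(-,W) -> B along elements a in A[W], b in B[W]\<close>

definition glue_step :: "('o, 'm) dcat \<Rightarrow> ('o, 'm, 'a) psh \<Rightarrow> ('o, 'm, 'b) psh \<Rightarrow> 'o \<Rightarrow> 'a \<Rightarrow> 'b \<Rightarrow>
    'o \<Rightarrow> 'a + 'b \<Rightarrow> 'a + 'b \<Rightarrow> bool" where
  "glue_step C A B W a b U p q \<longleftrightarrow>
     (\<exists>\<psi>\<in>Mor C. Dm C \<psi> = U \<and> Cd C \<psi> = W \<and> p = Inl (Act A \<psi> a) \<and> q = Inr (Act B \<psi> b))"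

definition glue_cls :: "('o, 'm) dcat \<Rightarrow> ('o, 'm, 'a) psh \<Rightarrow> ('o, 'm, 'b) psh \<Rightarrow> 'o \<Rightarrow> 'a \<Rightarrow> 'b \<Rightarrow>
    'o \<Rightarrow> 'a + 'b \<Rightarrow> ('a + 'b) set" where
  "glue_cls C A B W a b U p =
     {q. (\<lambda>u v. glue_step C A B W a b U u v \<or> glue_step C A B W a b U v u)\<^sup>*\<^sup>* p q}"

definition glue :: "('o, 'm) dcat \<Rightarrow> ('o, 'm, 'a) psh \<Rightarrow> ('o, 'm, 'b) psh \<Rightarrow> 'o \<Rightarrow> 'a \<Rightarrow> 'b \<Rightarrow>
    ('o, 'm, ('a + 'b) set) psh" where
  "glue C A B W a b = \<lparr> Elt = (\<lambda>U. glue_cls C A B W a b U ` (Inl ` Elt A U \<union> Inr ` Elt B U)),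
      Act = (\<lambda>\<phi> c. glue_cls C A B W a b (Dm C \<phi>) (map_sum (Act A \<phi>) (Act B \<phi>) (SOME p. p \<in> c))) \<rparr>"

text \<open>Gamma * Delta for the track objects of paths (ws1,Wo1,Wm1), (ws2,Wo2,Wm2), and the
  canonical map j : Gamma -> Gamma * Delta.\<close>
definition track_concat where
  "track_concat C ws1 Wo1 Wm1 ws2 Wo2 Wm2 =
     glue C (track C ws1 Wo1 Wm1) (track C ws2 Wo2 Wm2) (Wo1 (length ws1))
       (track_top C ws1 Wo1 Wm1) (track_bot C ws2 Wo2 Wm2)"

definition track_concat_j where
  "track_concat_j C ws1 Wo1 Wm1 ws2 Wo2 Wm2 = (\<lambda>U x.
     glue_cls C (track C ws1 Wo1 Wm1) (track C ws2 Wo2 Wm2) (Wo1 (length ws1))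
       (track_top C ws1 Wo1 Wm1) (track_bot C ws2 Wo2 Wm2) U (Inl x))"

definition path_lifting :: "('o, 'm) dcat \<Rightarrow> ('o, 'm, 'y) psh \<Rightarrow> ('o, 'm, 'x) psh \<Rightarrow>
    ('o \<Rightarrow> 'y \<Rightarrow> 'x) \<Rightarrow> bool" where
  "path_lifting C Y X f \<longleftrightarrow>
     (\<forall>ws Ao Am. path (elcat C X) ws Ao Am \<longrightarrow>
       (\<forall>y\<in>Ob (elcat C Y). Ef_ob f y = Ao 0 \<longrightarrow>
         (\<exists>Bo Bm. path (elcat C Y) ws Bo Bm \<and> Bo 0 = y \<and>
            (\<forall>i\<in>Ob (Lin ws). Ef_ob f (Bo i) = Ao i) \<and>
            (\<forall>m\<in>Mor (Lin ws). Ef_mor C f (Bm m) = Am m))))"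

definition track_lifting :: "('o, 'm) dcat \<Rightarrow> ('o, 'm, 'y) psh \<Rightarrow> ('o, 'm, 'x) psh \<Rightarrow>
    ('o \<Rightarrow> 'y \<Rightarrow> 'x) \<Rightarrow> bool" where
  "track_lifting C Y X f \<longleftrightarrow>
     (\<forall>ws Wo Wm. path C ws Wo Wm \<longrightarrow>
       (\<forall>\<alpha>. psh_map C (track C ws Wo Wm) X \<alpha> \<longrightarrow>
         (\<forall>y\<in>Elt Y (Wo 0). f (Wo 0) y = \<alpha> (Wo 0) (track_bot C ws Wo Wm) \<longrightarrow>
           (\<exists>\<beta>. psh_map C (track C ws Wo Wm) Y \<beta> \<and>
              \<beta> (Wo 0) (track_bot C ws Wo Wm) = y \<and>
              (\<forall>U\<in>Ob C. \<forall>z\<in>Elt (track C ws Wo Wm) U. f U (\<beta> U z) = \<alpha> U z)))))"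

definition track_extension :: "('o, 'm) dcat \<Rightarrow> ('o, 'm, 'y) psh \<Rightarrow> ('o, 'm, 'x) psh \<Rightarrow>
    ('o \<Rightarrow> 'y \<Rightarrow> 'x) \<Rightarrow> bool" where
  "track_extension C Y X f \<longleftrightarrow>
     (\<forall>ws1 Wo1 Wm1 ws2 Wo2 Wm2. path C ws1 Wo1 Wm1 \<longrightarrow> path C ws2 Wo2 Wm2 \<longrightarrow>
        Wo1 (length ws1) = Wo2 0 \<longrightarrow>
       (let G = track C ws1 Wo1 Wm1;
            P = track_concat C ws1 Wo1 Wm1 ws2 Wo2 Wm2;
            j = track_concat_j C ws1 Wo1 Wm1 ws2 Wo2 Wm2
        in \<forall>\<gamma> \<alpha>. psh_map C G Y \<gamma> \<longrightarrow> psh_map C P X \<alpha> \<longrightarrow>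
             (\<forall>U\<in>Ob C. \<forall>x\<in>Elt G U. \<alpha> U (j U x) = f U (\<gamma> U x)) \<longrightarrow>
             (\<exists>\<beta>. psh_map C P Y \<beta> \<and>
                (\<forall>U\<in>Ob C. \<forall>x\<in>Elt G U. \<beta> U (j U x) = \<gamma> U x) \<and>
                (\<forall>U\<in>Ob C. \<forall>z\<in>Elt P U. f U (\<beta> U z) = \<alpha> U z))))"

end

theory Submission
  imports Defs
begin

text \<open>A presheaf map out of the track object of a path \<open>\<omega>\<close> amounts to a compatible family of
  elements \<open>x\<^sub>i \<in> X[\<omega> i]\<close>, and a path in \<open>E X\<close> is a path in \<open>C\<close> carrying such a family. So (2) and
  (3) ask to lift compatible families along \<open>f\<close> from a prescribed first element, which future
  openness does one letter at a time: across a formorphism by openness itself, across a backmorphism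
  by restriction. A map out of the pushout \<open>\<Gamma> * \<Delta>\<close> is a pair of maps agreeing at the junction,
  so (4) follows by lifting the \<open>\<Delta>\<close>-part from the image of the accept element of \<open>\<Gamma>\<close>; conversely
  (4) contains (3) by taking for \<open>\<Gamma>\<close> the representable track object of the empty path. Finally
  (2) and (3), applied to the one-letter path along a formorphism, give back future openness.\<close>

lemma symclp_rtranclp_eq_equivclp: "(\<lambda>a b. R a b \<or> R b a)\<^sup>*\<^sup>* = equivclp R"
  by (simp add: equivclp_def symclp_def[abs_def])

lemma equivclp_classes_eq: "equivclp R p q \<Longrightarrow> {r. equivclp R p r} = {r. equivclp R q r}"
  by (blast intro: equivclp_trans equivclp_sym)

lemma equivclp_map:
  assumes "\<And>a b. R a b \<Longrightarrow> R' (h a) (h b)" and "equivclp R p q"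
  shows "equivclp R' (h p) (h q)"
  using assms(2) by induction (auto intro: equivclp_into_equivclp dest: assms(1))

lemma equivclp_invariant:
  assumes "\<And>a b. R a b \<Longrightarrow> g a = g b" and "equivclp R p q"
  shows "g q = g p"
  using assms(2) by induction (auto dest: assms(1))

lemma presheaf_act_elt:
  "presheaf C X \<Longrightarrow> \<phi> \<in> Mor C \<Longrightarrow> x \<in> Elt X (Cd C \<phi>) \<Longrightarrow> Act X \<phi> x \<in> Elt X (Dm C \<phi>)"
  unfolding presheaf_def by auto

lemma presheaf_act_id: "presheaf C X \<Longrightarrow> U \<in> Ob C \<Longrightarrow> x \<in> Elt X U \<Longrightarrow> Act X (Idm C U) x = x"
  unfolding presheaf_def by auto

lemma presheaf_act_comp:
  "presheaf C X \<Longrightarrow> \<phi> \<in> Mor C \<Longrightarrow> \<psi> \<in> Mor C \<Longrightarrow> Cd C \<phi> = Dm C \<psi> \<Longrightarrow> x \<in> Elt X (Cd C \<psi>) \<Longrightarrow>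
    Act X (Cmp C \<psi> \<phi>) x = Act X \<phi> (Act X \<psi> x)"
  unfolding presheaf_def by auto

lemma psh_map_elt: "psh_map C Y X f \<Longrightarrow> U \<in> Ob C \<Longrightarrow> y \<in> Elt Y U \<Longrightarrow> f U y \<in> Elt X U"
  unfolding psh_map_def by auto

lemma psh_map_natural:
  "psh_map C Y X f \<Longrightarrow> \<phi> \<in> Mor C \<Longrightarrow> y \<in> Elt Y (Cd C \<phi>) \<Longrightarrow>
    f (Dm C \<phi>) (Act Y \<phi> y) = Act X \<phi> (f (Cd C \<phi>) y)"
  unfolding psh_map_def by auto

locale small_category =
  fixes C :: "('o, 'm) dcat"
  assumes category: "category C"
begin

lemma id_mor [simp]: "U \<in> Ob C \<Longrightarrow> Idm C U \<in> Mor C"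
  and dom_id [simp]: "U \<in> Ob C \<Longrightarrow> Dm C (Idm C U) = U"
  and cod_id [simp]: "U \<in> Ob C \<Longrightarrow> Cd C (Idm C U) = U"
  using category unfolding category_def by auto

lemma dom_ob [simp]: "\<phi> \<in> Mor C \<Longrightarrow> Dm C \<phi> \<in> Ob C"
  and cod_ob [simp]: "\<phi> \<in> Mor C \<Longrightarrow> Cd C \<phi> \<in> Ob C"
  using category unfolding category_def by auto

lemma psh_map_comp: "psh_map C Y X f \<Longrightarrow> psh_map C X Z g \<Longrightarrow> psh_map C Y Z (\<lambda>U y. g U (f U y))"
  unfolding psh_map_def by auto

lemma comp_mor [simp]: "\<phi> \<in> Mor C \<Longrightarrow> \<psi> \<in> Mor C \<Longrightarrow> Cd C \<phi> = Dm C \<psi> \<Longrightarrow> Cmp C \<psi> \<phi> \<in> Mor C"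
  and dom_comp [simp]: "\<phi> \<in> Mor C \<Longrightarrow> \<psi> \<in> Mor C \<Longrightarrow> Cd C \<phi> = Dm C \<psi> \<Longrightarrow> Dm C (Cmp C \<psi> \<phi>) = Dm C \<phi>"
  and cod_comp [simp]: "\<phi> \<in> Mor C \<Longrightarrow> \<psi> \<in> Mor C \<Longrightarrow> Cd C \<phi> = Dm C \<psi> \<Longrightarrow> Cd C (Cmp C \<psi> \<phi>) = Cd C \<psi>"
  using category unfolding category_def by auto

lemma comp_id_right [simp]: "\<phi> \<in> Mor C \<Longrightarrow> Cmp C \<phi> (Idm C (Dm C \<phi>)) = \<phi>"
  and comp_id_left [simp]: "\<phi> \<in> Mor C \<Longrightarrow> Cmp C (Idm C (Cd C \<phi>)) \<phi> = \<phi>"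
  using category unfolding category_def by auto

lemma comp_assoc:
  "\<phi> \<in> Mor C \<Longrightarrow> \<psi> \<in> Mor C \<Longrightarrow> \<chi> \<in> Mor C \<Longrightarrow> Cd C \<phi> = Dm C \<psi> \<Longrightarrow> Cd C \<psi> = Dm C \<chi> \<Longrightarrow>
    Cmp C \<chi> (Cmp C \<psi> \<phi>) = Cmp C (Cmp C \<chi> \<psi>) \<phi>"
  using category unfolding category_def by auto

end

lemma dcategory_category: "dcategory C \<Longrightarrow> category C"
  unfolding dcategory_def by simp

lemma dcategory_Fwd_mor: "dcategory C \<Longrightarrow> \<phi> \<in> Fwd C \<Longrightarrow> \<phi> \<in> Mor C"
  unfolding dcategory_def wide_subcat_def by auto

lemma dcategory_id_Fwd_Bwd: "dcategory C \<Longrightarrow> U \<in> Ob C \<Longrightarrow> Idm C U \<in> Fwd C \<and> Idm C U \<in> Bwd C"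
  unfolding dcategory_def wide_subcat_def by auto

lemma lin_mor_iff:
  "(i, j) \<in> lin_mor ws \<longleftrightarrow> i \<le> length ws \<and> j \<le> length ws \<and>
     (if i \<le> j then \<forall>k. i \<le> k \<and> k < j \<longrightarrow> ws ! k \<noteq> T else \<forall>k. j \<le> k \<and> k < i \<longrightarrow> ws ! k \<noteq> S)"
  unfolding lin_mor_def by auto

lemma Lin_simps [simp]:
  "Ob (Lin ws) = {0..length ws}" "Mor (Lin ws) = lin_mor ws"
  "Dm (Lin ws) = fst" "Cd (Lin ws) = snd" "Idm (Lin ws) = (\<lambda>i. (i, i))"
  "Cmp (Lin ws) = (\<lambda>g f. (fst f, snd g))"
  "Fwd (Lin ws) = {(i, j) \<in> lin_mor ws. i \<le> j \<or> all_I ws j i}"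
  "Bwd (Lin ws) = {(i, j) \<in> lin_mor ws. j \<le> i \<or> all_I ws i j}"
  unfolding Lin_def by simp_all

lemma lin_mor_dom_le: "(i, j) \<in> lin_mor ws \<Longrightarrow> i \<le> length ws"
  and lin_mor_cod_le: "(i, j) \<in> lin_mor ws \<Longrightarrow> j \<le> length ws"
  by (simp_all add: lin_mor_iff)

lemma lin_mor_split_up:
  "(i, j) \<in> lin_mor ws \<Longrightarrow> i < j \<Longrightarrow> (i, Suc i) \<in> lin_mor ws \<and> (Suc i, j) \<in> lin_mor ws"
  by (auto simp add: lin_mor_iff)

lemma lin_mor_split_down:
  "(Suc i, j) \<in> lin_mor ws \<Longrightarrow> j \<le> i \<Longrightarrow> (Suc i, i) \<in> lin_mor ws \<and> (i, j) \<in> lin_mor ws"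
  by (auto simp add: lin_mor_iff)

lemma lin_mor_up_iff: "(k, Suc k) \<in> lin_mor ws \<longleftrightarrow> k < length ws \<and> ws ! k \<noteq> T"
proof -
  have "(\<forall>l. k \<le> l \<and> l < Suc k \<longrightarrow> ws ! l \<noteq> T) \<longleftrightarrow> ws ! k \<noteq> T"
    by (auto simp: less_Suc_eq_le dest: le_antisym)
  then show ?thesis by (auto simp add: lin_mor_iff Suc_le_eq)
qed

lemma lin_mor_down_iff: "(Suc k, k) \<in> lin_mor ws \<longleftrightarrow> k < length ws \<and> ws ! k \<noteq> S"
proof -
  have "(\<forall>l. k \<le> l \<and> l < Suc k \<longrightarrow> ws ! l \<noteq> S) \<longleftrightarrow> ws ! k \<noteq> S"
    by (auto simp: less_Suc_eq_le dest: le_antisym)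
  then show ?thesis by (auto simp add: lin_mor_iff Suc_le_eq)
qed

lemma lin_mor_Nil: "lin_mor [] = {(0, 0)}"
  unfolding lin_mor_def by auto

lemma lin_mor_S: "lin_mor [S] = {(0, 0), (1, 1), (0, 1)}"
  unfolding lin_mor_def by (auto simp: le_Suc_eq)

definition compatible_family ::
    "('o, 'm) dcat \<Rightarrow> letter list \<Rightarrow> (nat \<Rightarrow> 'o) \<Rightarrow> (nat \<times> nat \<Rightarrow> 'm) \<Rightarrow> ('o, 'm, 'e) psh \<Rightarrow>
      (nat \<Rightarrow> 'e) \<Rightarrow> bool" where
  "compatible_family C ws Wo Wm Z z \<longleftrightarrow> (\<forall>i \<le> length ws. z i \<in> Elt Z (Wo i)) \<and>
     (\<forall>i j. (i, j) \<in> lin_mor ws \<longrightarrow> Act Z (Wm (i, j)) (z j) = z i)"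

locale cat_path = small_category +
  fixes ws :: "letter list" and Wo :: "nat \<Rightarrow> 'o" and Wm :: "nat \<times> nat \<Rightarrow> 'm"
  assumes path: "path C ws Wo Wm"
begin

abbreviation "n \<equiv> length ws"
abbreviation "compatible \<equiv> compatible_family C ws Wo Wm"

lemma Wo_ob [simp]: "i \<le> n \<Longrightarrow> Wo i \<in> Ob C"
  using path unfolding path_def dfunctor_def by auto

lemma Wm_mor [simp]: "(i, j) \<in> lin_mor ws \<Longrightarrow> Wm (i, j) \<in> Mor C"
  and dom_Wm [simp]: "(i, j) \<in> lin_mor ws \<Longrightarrow> Dm C (Wm (i, j)) = Wo i"
  and cod_Wm [simp]: "(i, j) \<in> lin_mor ws \<Longrightarrow> Cd C (Wm (i, j)) = Wo j"
  using path unfolding path_def dfunctor_def by fastforce+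

lemma Wm_id: "i \<le> n \<Longrightarrow> Wm (i, i) = Idm C (Wo i)"
  using path unfolding path_def dfunctor_def by auto

lemma Wm_comp:
  assumes "(i, j) \<in> lin_mor ws" and "(j, k) \<in> lin_mor ws"
  shows "Wm (i, k) = Cmp C (Wm (j, k)) (Wm (i, j))"
proof -
  have "\<forall>f\<in>lin_mor ws. \<forall>g\<in>lin_mor ws. snd f = fst g \<longrightarrow> Wm (fst f, snd g) = Cmp C (Wm g) (Wm f)"
    using path unfolding path_def dfunctor_def by simp
  then show ?thesis
    using assms by force
qed

lemma Wm_Fwd: "(i, j) \<in> lin_mor ws \<Longrightarrow> i \<le> j \<Longrightarrow> Wm (i, j) \<in> Fwd C"
  using path unfolding path_def dfunctor_def by fastforce

lemma compatible_elt: "compatible Z z \<Longrightarrow> i \<le> n \<Longrightarrow> z i \<in> Elt Z (Wo i)"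
  and compatible_act: "compatible Z z \<Longrightarrow> (i, j) \<in> lin_mor ws \<Longrightarrow> Act Z (Wm (i, j)) (z j) = z i"
  unfolding compatible_family_def by auto

lemma restrict_upward:
  assumes Z: "presheaf C Z" and el: "\<And>i. i \<le> n \<Longrightarrow> z i \<in> Elt Z (Wo i)"
    and up: "\<And>k. k < n \<Longrightarrow> ws ! k \<noteq> T \<Longrightarrow> Act Z (Wm (k, Suc k)) (z (Suc k)) = z k"
    and ij: "(i, j) \<in> lin_mor ws" "i \<le> j"
  shows "Act Z (Wm (i, j)) (z j) = z i"
  using ij
proof (induction "j - i" arbitrary: i)
  case 0
  then show ?case using Wm_id presheaf_act_id[OF Z] el lin_mor_dom_le by auto
next
  case (Suc d)
  then have "i < j" by simp
  with lin_mor_split_up Suc.prems(1)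
  have step: "(i, Suc i) \<in> lin_mor ws" and rest: "(Suc i, j) \<in> lin_mor ws" by blast+
  have "Act Z (Wm (i, j)) (z j) = Act Z (Wm (i, Suc i)) (Act Z (Wm (Suc i, j)) (z j))"
    using Wm_comp[OF step rest] presheaf_act_comp[OF Z] step rest el lin_mor_cod_le by auto
  also have "\<dots> = Act Z (Wm (i, Suc i)) (z (Suc i))"
    using Suc.hyps(1)[of "Suc i"] Suc.hyps(2) rest \<open>i < j\<close> by simp
  also have "\<dots> = z i" using up step lin_mor_up_iff by auto
  finally show ?case .
qed

lemma restrict_downward:
  assumes Z: "presheaf C Z" and el: "\<And>i. i \<le> n \<Longrightarrow> z i \<in> Elt Z (Wo i)"
    and down: "\<And>k. k < n \<Longrightarrow> ws ! k \<noteq> S \<Longrightarrow> Act Z (Wm (Suc k, k)) (z k) = z (Suc k)"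
    and ij: "(i, j) \<in> lin_mor ws" "j \<le> i"
  shows "Act Z (Wm (i, j)) (z j) = z i"
  using ij
proof (induction "i - j" arbitrary: i)
  case 0
  then show ?case using Wm_id presheaf_act_id[OF Z] el lin_mor_dom_le by auto
next
  case (Suc d)
  then obtain i' where i': "i = Suc i'" and "j \<le> i'" by (cases i) auto
  with lin_mor_split_down Suc.prems(1)
  have step: "(Suc i', i') \<in> lin_mor ws" and rest: "(i', j) \<in> lin_mor ws" by blast+
  have "Act Z (Wm (Suc i', j)) (z j) = Act Z (Wm (Suc i', i')) (Act Z (Wm (i', j)) (z j))"
    using Wm_comp[OF step rest] presheaf_act_comp[OF Z] step rest el lin_mor_cod_le by auto
  also have "\<dots> = Act Z (Wm (Suc i', i')) (z i')"
    using Suc.hyps(1)[of i'] Suc.hyps(2) rest i' \<open>j \<le> i'\<close> by simp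
  also have "\<dots> = z (Suc i')" using down step lin_mor_down_iff by auto
  finally show ?case using i' by simp
qed

lemma compatible_familyI:
  assumes "presheaf C Z" and "\<And>i. i \<le> n \<Longrightarrow> z i \<in> Elt Z (Wo i)"
    and "\<And>k. k < n \<Longrightarrow> ws ! k \<noteq> T \<Longrightarrow> Act Z (Wm (k, Suc k)) (z (Suc k)) = z k"
    and "\<And>k. k < n \<Longrightarrow> ws ! k \<noteq> S \<Longrightarrow> Act Z (Wm (Suc k, k)) (z k) = z (Suc k)"
  shows "compatible Z z"
  unfolding compatible_family_def
  using assms restrict_upward[OF assms(1,2,3)] restrict_downward[OF assms(1,2,4)] nat_le_linear
  by blast

end

lemma cat_pathI: "dcategory C \<Longrightarrow> path C ws Wo Wm \<Longrightarrow> cat_path C ws Wo Wm"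
  by unfold_locales (simp_all add: dcategory_category)

context cat_path
begin

abbreviation "tcar \<equiv> track_carrier C ws Wo"
abbreviation "tstep \<equiv> track_step C ws Wo Wm"
abbreviation "tcls \<equiv> track_cls C ws Wo Wm"
abbreviation "Tr \<equiv> track C ws Wo Wm"

text \<open>The generators \<open>tgen i\<close>, images of the identities of \<open>Wo i\<close>: a presheaf map out of \<open>Tr\<close> is
  determined by its values on them, and these form a compatible family. \<open>track_bot\<close> and
  \<open>track_top\<close> are the first and the last generator.\<close>

abbreviation "tgen i \<equiv> tcls (Wo i) (i, Idm C (Wo i))"

lemma tcar_iff: "(i, \<psi>) \<in> tcar U \<longleftrightarrow> i \<le> n \<and> \<psi> \<in> Mor C \<and> Dm C \<psi> = U \<and> Cd C \<psi> = Wo i"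
  unfolding track_carrier_def by auto

lemma tgen_tcar: "i \<le> n \<Longrightarrow> (i, Idm C (Wo i)) \<in> tcar (Wo i)"
  by (simp add: tcar_iff)

lemma tstep_iff:
  "tstep U p q \<longleftrightarrow> p \<in> tcar U \<and> q \<in> tcar U \<and>
     (\<exists>i j \<psi>. (i, j) \<in> lin_mor ws \<and> p = (i, \<psi>) \<and> q = (j, Cmp C (Wm (i, j)) \<psi>))"
  by (simp add: track_step_def)

lemma tcls_equivclp: "tcls U p = {q. equivclp (tstep U) p q}"
  by (simp add: track_cls_def symclp_rtranclp_eq_equivclp)

lemma tcls_self: "p \<in> tcls U p"
  by (simp add: tcls_equivclp)

lemma tcls_eq: "q \<in> tcls U p \<Longrightarrow> tcls U q = tcls U p"
  by (simp add: tcls_equivclp equivclp_classes_eq)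

lemma tcls_step: "tstep U p q \<Longrightarrow> tcls U q = tcls U p"
  by (rule tcls_eq) (auto simp: tcls_equivclp)

lemma tcls_invariant: "(\<And>a b. tstep U a b \<Longrightarrow> g a = g b) \<Longrightarrow> q \<in> tcls U p \<Longrightarrow> g q = g p"
  unfolding tcls_equivclp by (blast intro: equivclp_invariant)

lemma Elt_track: "Elt Tr U = tcls U ` tcar U"
  unfolding track_def by simp

lemma tgen_elt: "i \<le> n \<Longrightarrow> tgen i \<in> Elt Tr (Wo i)"
  using tgen_tcar Elt_track by simp

lemma Act_track_tcls:
  assumes \<phi>: "\<phi> \<in> Mor C" and p: "(i, \<chi>) \<in> tcar (Cd C \<phi>)"
  shows "Act Tr \<phi> (tcls (Cd C \<phi>) (i, \<chi>)) = tcls (Dm C \<phi>) (i, Cmp C \<chi> \<phi>)"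
proof -
  define h where "h = (\<lambda>(i :: nat, \<psi>). (i, Cmp C \<psi> \<phi>))"
  define p where "p = (SOME p. p \<in> tcls (Cd C \<phi>) (i, \<chi>))"
  have "p \<in> tcls (Cd C \<phi>) (i, \<chi>)"
    unfolding p_def by (rule someI, rule tcls_self)
  moreover have hstep: "tstep (Dm C \<phi>) (h a) (h b)" if "tstep (Cd C \<phi>) a b" for a b
  proof -
    from that obtain i j \<psi> where ij: "(i, j) \<in> lin_mor ws" and a: "a = (i, \<psi>)"
      and b: "b = (j, Cmp C (Wm (i, j)) \<psi>)" and "a \<in> tcar (Cd C \<phi>)"
      unfolding tstep_iff by blast
    then have \<psi>: "\<psi> \<in> Mor C" "Dm C \<psi> = Cd C \<phi>" "Cd C \<psi> = Wo i"
      by (auto simp: tcar_iff)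
    have "Cmp C (Cmp C (Wm (i, j)) \<psi>) \<phi> = Cmp C (Wm (i, j)) (Cmp C \<psi> \<phi>)"
      using comp_assoc[of \<phi> \<psi> "Wm (i, j)"] \<psi> \<phi> ij by simp
    then show ?thesis
      unfolding tstep_iff h_def using a b ij \<psi> \<phi> lin_mor_dom_le lin_mor_cod_le
      by (auto simp: tcar_iff)
  qed
  ultimately have "h p \<in> tcls (Dm C \<phi>) (h (i, \<chi>))"
    using equivclp_map[of "tstep (Cd C \<phi>)" "tstep (Dm C \<phi>)" h, OF hstep] by (simp add: tcls_equivclp)
  then have "tcls (Dm C \<phi>) (h p) = tcls (Dm C \<phi>) (h (i, \<chi>))"
    by (rule tcls_eq)
  then show ?thesis
    unfolding track_def h_def p_def by (simp add: split_beta)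
qed

lemma presheaf_track: "presheaf C Tr"
  unfolding presheaf_def
proof (intro conjI ballI impI)
  fix \<phi> c assume \<phi>: "\<phi> \<in> Mor C" and "c \<in> Elt Tr (Cd C \<phi>)"
  then obtain i \<chi> where c: "c = tcls (Cd C \<phi>) (i, \<chi>)" "(i, \<chi>) \<in> tcar (Cd C \<phi>)"
    unfolding Elt_track by auto
  moreover have "(i, Cmp C \<chi> \<phi>) \<in> tcar (Dm C \<phi>)"
    using c(2) \<phi> by (auto simp: tcar_iff)
  ultimately show "Act Tr \<phi> c \<in> Elt Tr (Dm C \<phi>)"
    using Act_track_tcls[OF \<phi> c(2)] unfolding Elt_track by blast
next
  fix U c assume U: "U \<in> Ob C" and "c \<in> Elt Tr U"
  then obtain i \<chi> where c: "c = tcls U (i, \<chi>)" "(i, \<chi>) \<in> tcar U"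
    unfolding Elt_track by auto
  then have \<chi>: "\<chi> \<in> Mor C" "Dm C \<chi> = U"
    by (auto simp: tcar_iff)
  have "Act Tr (Idm C U) c = tcls U (i, Cmp C \<chi> (Idm C U))"
    using Act_track_tcls[of "Idm C U" i \<chi>] c U by simp
  also have "\<dots> = c"
    using comp_id_right[OF \<chi>(1)] \<chi>(2) c(1) by simp
  finally show "Act Tr (Idm C U) c = c" .
next
  fix \<phi> \<psi> c assume \<phi>\<psi>: "\<phi> \<in> Mor C" "\<psi> \<in> Mor C" "Cd C \<phi> = Dm C \<psi>" and "c \<in> Elt Tr (Cd C \<psi>)"
  then obtain i \<chi> where c: "c = tcls (Cd C \<psi>) (i, \<chi>)" "(i, \<chi>) \<in> tcar (Cd C \<psi>)"
    unfolding Elt_track by auto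
  have \<chi>: "i \<le> n" "\<chi> \<in> Mor C" "Dm C \<chi> = Cd C \<psi>" "Cd C \<chi> = Wo i"
    using c(2) by (auto simp: tcar_iff)
  then have m: "(i, Cmp C \<chi> \<psi>) \<in> tcar (Cd C \<phi>)"
    using \<phi>\<psi> by (simp add: tcar_iff)
  have "Act Tr \<phi> (Act Tr \<psi> c) = tcls (Dm C \<phi>) (i, Cmp C (Cmp C \<chi> \<psi>) \<phi>)"
    using Act_track_tcls[OF \<phi>\<psi>(2) c(2)] Act_track_tcls[OF \<phi>\<psi>(1) m] c(1) \<phi>\<psi>(3) by simp
  also have "\<dots> = tcls (Dm C \<phi>) (i, Cmp C \<chi> (Cmp C \<psi> \<phi>))"
    using comp_assoc[of \<phi> \<psi> \<chi>] \<phi>\<psi> \<chi> by simp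
  also have "\<dots> = Act Tr (Cmp C \<psi> \<phi>) c"
    using Act_track_tcls[of "Cmp C \<psi> \<phi>" i \<chi>] c \<phi>\<psi> by simp
  finally show "Act Tr (Cmp C \<psi> \<phi>) c = Act Tr \<phi> (Act Tr \<psi> c)" by (rule sym)
qed

definition track_map :: "('o, 'm, 'e) psh \<Rightarrow> (nat \<Rightarrow> 'e) \<Rightarrow> 'o \<Rightarrow> (nat \<times> 'm) set \<Rightarrow> 'e" where
  "track_map Z z = (\<lambda>U c. case (SOME p. p \<in> c) of (i, \<psi>) \<Rightarrow> Act Z \<psi> (z i))"

lemma track_map_tcls:
  assumes Z: "presheaf C Z" and z: "compatible Z z" and p: "(i, \<psi>) \<in> tcar U"
  shows "track_map Z z U (tcls U (i, \<psi>)) = Act Z \<psi> (z i)"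
proof -
  define g where "g = (\<lambda>(i, \<psi>). Act Z \<psi> (z i))"
  have "g a = g b" if "tstep U a b" for a b
  proof -
    from that obtain i j \<psi> where ij: "(i, j) \<in> lin_mor ws" and a: "a = (i, \<psi>)"
      and b: "b = (j, Cmp C (Wm (i, j)) \<psi>)" and "a \<in> tcar U"
      unfolding tstep_iff by blast
    then have \<psi>: "\<psi> \<in> Mor C" "Cd C \<psi> = Wo i" by (auto simp: tcar_iff)
    have "Act Z (Cmp C (Wm (i, j)) \<psi>) (z j) = Act Z \<psi> (Act Z (Wm (i, j)) (z j))"
      using presheaf_act_comp[OF Z] \<psi> ij compatible_elt[OF z] lin_mor_cod_le by auto
    then show ?thesis unfolding g_def a b using compatible_act[OF z ij] by simp
  qed
  moreover have "(SOME p. p \<in> tcls U (i, \<psi>)) \<in> tcls U (i, \<psi>)"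
    by (rule someI, rule tcls_self)
  ultimately show ?thesis
    unfolding track_map_def using tcls_invariant[of U g] by (fastforce simp: g_def split_beta)
qed

lemma track_map_tgen:
  "presheaf C Z \<Longrightarrow> compatible Z z \<Longrightarrow> i \<le> n \<Longrightarrow> track_map Z z (Wo i) (tgen i) = z i"
  using track_map_tcls tgen_tcar presheaf_act_id compatible_elt by fastforce

lemma psh_map_track_map:
  assumes Z: "presheaf C Z" and z: "compatible Z z"
  shows "psh_map C Tr Z (track_map Z z)"
  unfolding psh_map_def
proof (intro conjI ballI)
  fix U c assume "U \<in> Ob C" and "c \<in> Elt Tr U"
  then obtain i \<chi> where c: "c = tcls U (i, \<chi>)" "(i, \<chi>) \<in> tcar U"
    unfolding Elt_track by auto
  then show "track_map Z z U c \<in> Elt Z U"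
    using track_map_tcls[OF Z z] presheaf_act_elt[OF Z] compatible_elt[OF z] by (auto simp: tcar_iff)
next
  fix \<phi> c assume \<phi>: "\<phi> \<in> Mor C" and "c \<in> Elt Tr (Cd C \<phi>)"
  then obtain i \<chi> where c: "c = tcls (Cd C \<phi>) (i, \<chi>)" "(i, \<chi>) \<in> tcar (Cd C \<phi>)"
    unfolding Elt_track by auto
  have \<chi>: "i \<le> n" "\<chi> \<in> Mor C" "Dm C \<chi> = Cd C \<phi>" "Cd C \<chi> = Wo i"
    using c(2) by (auto simp: tcar_iff)
  then have m: "(i, Cmp C \<chi> \<phi>) \<in> tcar (Dm C \<phi>)"
    using \<phi> by (simp add: tcar_iff)
  have "track_map Z z (Dm C \<phi>) (Act Tr \<phi> c) = Act Z (Cmp C \<chi> \<phi>) (z i)"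
    using Act_track_tcls[OF \<phi> c(2)] track_map_tcls[OF Z z m] c(1) by simp
  also have "\<dots> = Act Z \<phi> (Act Z \<chi> (z i))"
    using presheaf_act_comp[OF Z \<phi> \<chi>(2)] \<chi> compatible_elt[OF z] by simp
  also have "\<dots> = Act Z \<phi> (track_map Z z (Cd C \<phi>) c)"
    using track_map_tcls[OF Z z c(2)] c(1) by simp
  finally show "track_map Z z (Dm C \<phi>) (Act Tr \<phi> c) = Act Z \<phi> (track_map Z z (Cd C \<phi>) c)" .
qed

lemma psh_map_track_tcls:
  assumes \<beta>: "psh_map C Tr Z \<beta>" and p: "(i, \<psi>) \<in> tcar U"
  shows "\<beta> U (tcls U (i, \<psi>)) = Act Z \<psi> (\<beta> (Wo i) (tgen i))"
proof -
  have \<psi>: "\<psi> \<in> Mor C" "Dm C \<psi> = U" "Cd C \<psi> = Wo i" "i \<le> n"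
    using p by (auto simp: tcar_iff)
  moreover have "Cmp C (Idm C (Wo i)) \<psi> = \<psi>"
    using comp_id_left[of \<psi>] \<psi> by simp
  ultimately have "Act Tr \<psi> (tgen i) = tcls U (i, \<psi>)"
    using Act_track_tcls[of \<psi> i "Idm C (Wo i)"] tgen_tcar by simp
  moreover have "tgen i \<in> Elt Tr (Cd C \<psi>)"
    using tgen_elt \<psi> by simp
  ultimately show ?thesis
    using psh_map_natural[OF \<beta> \<psi>(1)] \<psi> by force
qed

lemma compatible_psh_map_tgen:
  assumes \<beta>: "psh_map C Tr Z \<beta>"
  shows "compatible Z (\<lambda>i. \<beta> (Wo i) (tgen i))"
  unfolding compatible_family_def
proof (intro conjI allI impI)
  fix i assume "i \<le> n"
  then show "\<beta> (Wo i) (tgen i) \<in> Elt Z (Wo i)"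
    using psh_map_elt[OF \<beta>] tgen_elt by simp
next
  fix i j assume ij: "(i, j) \<in> lin_mor ws"
  then have "(j, Wm (i, j)) \<in> tcar (Wo i)"
    using lin_mor_cod_le by (simp add: tcar_iff)
  moreover have "tstep (Wo i) (i, Idm C (Wo i)) (j, Wm (i, j))"
    unfolding tstep_iff
    using calculation ij tgen_tcar[OF lin_mor_dom_le[OF ij]] comp_id_right[of "Wm (i, j)"] by fastforce
  ultimately show "Act Z (Wm (i, j)) (\<beta> (Wo j) (tgen j)) = \<beta> (Wo i) (tgen i)"
    using psh_map_track_tcls[OF \<beta>] tcls_step by metis
qed

lemma track_map_over:
  assumes fm: "psh_map C Y X f" and \<alpha>: "psh_map C Tr X \<alpha>" and Y: "presheaf C Y"
    and y: "compatible Y y" and over: "\<And>i. i \<le> n \<Longrightarrow> f (Wo i) (y i) = \<alpha> (Wo i) (tgen i)"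
    and c: "c \<in> Elt Tr U"
  shows "f U (track_map Y y U c) = \<alpha> U c"
proof -
  obtain i \<psi> where c: "c = tcls U (i, \<psi>)" and p: "(i, \<psi>) \<in> tcar U"
    using c unfolding Elt_track by auto
  then have \<psi>: "\<psi> \<in> Mor C" "Dm C \<psi> = U" "Cd C \<psi> = Wo i" "i \<le> n"
    by (auto simp: tcar_iff)
  have "f U (track_map Y y U c) = f U (Act Y \<psi> (y i))"
    using track_map_tcls[OF Y y p] c by simp
  also have "\<dots> = Act X \<psi> (f (Wo i) (y i))"
    using psh_map_natural[OF fm \<psi>(1)] \<psi> compatible_elt[OF y] by simp
  also have "\<dots> = \<alpha> U c"
    using over psh_map_track_tcls[OF \<alpha> p] c \<psi> by simp
  finally show ?thesis .
qed

lemma future_open_lift_step: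
  assumes Y: "presheaf C Y" and fm: "psh_map C Y X f" and fo: "future_open C Y X f"
    and x: "compatible X x" and k: "k < n"
    and yk: "yk \<in> Elt Y (Wo k)" and fk: "f (Wo k) yk = x k"
  obtains y' where "y' \<in> Elt Y (Wo (Suc k))" "f (Wo (Suc k)) y' = x (Suc k)"
    "ws ! k \<noteq> T \<Longrightarrow> Act Y (Wm (k, Suc k)) y' = yk"
    "ws ! k \<noteq> S \<Longrightarrow> Act Y (Wm (Suc k, k)) yk = y'"
proof (cases "ws ! k = S")
  case True
  then have m: "(k, Suc k) \<in> lin_mor ws"
    using k lin_mor_up_iff by simp
  moreover have "x (Suc k) \<in> Elt X (Wo (Suc k))"
    using compatible_elt[OF x] k by simp
  moreover have "Act X (Wm (k, Suc k)) (x (Suc k)) = f (Wo k) yk"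
    using compatible_act[OF x m] fk by simp
  ultimately obtain y' where y': "y' \<in> Elt Y (Wo (Suc k))" "Act Y (Wm (k, Suc k)) y' = yk"
      "f (Wo (Suc k)) y' = x (Suc k)"
    using fo Wm_Fwd[OF m] yk unfolding future_open_def by force
  show ?thesis
    using that[of y'] y' True by simp
next
  case False
  then have m: "(Suc k, k) \<in> lin_mor ws"
    using k lin_mor_down_iff by simp
  define y' where "y' = Act Y (Wm (Suc k, k)) yk"
  have "y' \<in> Elt Y (Wo (Suc k))"
    using presheaf_act_elt[OF Y Wm_mor[OF m]] m yk y'_def by simp
  moreover have "f (Wo (Suc k)) y' = x (Suc k)"
    using psh_map_natural[OF fm, of "Wm (Suc k, k)" yk] m yk fk compatible_act[OF x m] y'_def by simp
  moreover have "Act Y (Wm (k, Suc k)) y' = yk" if "ws ! k \<noteq> T"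
  proof -
    have m': "(k, Suc k) \<in> lin_mor ws"
      using k that lin_mor_up_iff by simp
    have "Act Y (Wm (k, Suc k)) y' = Act Y (Cmp C (Wm (Suc k, k)) (Wm (k, Suc k))) yk"
      using presheaf_act_comp[OF Y, of "Wm (k, Suc k)" "Wm (Suc k, k)" yk] m m' yk y'_def by simp
    also have "\<dots> = yk"
      using Wm_comp[OF m' m] Wm_id[of k] k presheaf_act_id[OF Y _ yk] by simp
    finally show ?thesis .
  qed
  moreover have "Act Y (Wm (Suc k, k)) yk = y'"
    by (simp add: y'_def)
  ultimately show ?thesis
    by (rule that)
qed

lemma future_open_lift:
  assumes Y: "presheaf C Y" and fm: "psh_map C Y X f" and fo: "future_open C Y X f"
    and x: "compatible X x" and y0: "y0 \<in> Elt Y (Wo 0)" and f0: "f (Wo 0) y0 = x 0"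
  obtains y where "compatible Y y" "y 0 = y0" "\<And>i. i \<le> n \<Longrightarrow> f (Wo i) (y i) = x i"
proof -
  define lifts where "lifts k yk y' \<longleftrightarrow> y' \<in> Elt Y (Wo (Suc k)) \<and> f (Wo (Suc k)) y' = x (Suc k) \<and>
      (ws ! k \<noteq> T \<longrightarrow> Act Y (Wm (k, Suc k)) y' = yk) \<and> (ws ! k \<noteq> S \<longrightarrow> Act Y (Wm (Suc k, k)) yk = y')"
    for k yk y'
  define y where "y = rec_nat y0 (\<lambda>k yk. SOME y'. lifts k yk y')"
  have step: "lifts k (y k) (y (Suc k))"
    if k: "k < n" "y k \<in> Elt Y (Wo k)" "f (Wo k) (y k) = x k" for k
  proof -
    obtain y' where "lifts k (y k) y'"
      using future_open_lift_step[OF Y fm fo x k] unfolding lifts_def by metis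
    then have "lifts k (y k) (SOME y'. lifts k (y k) y')"
      by (rule someI)
    then show ?thesis
      by (simp add: y_def)
  qed
  have good: "y i \<in> Elt Y (Wo i) \<and> f (Wo i) (y i) = x i" if "i \<le> n" for i
    using that
  proof (induction i)
    case 0
    then show ?case using y0 f0 by (simp add: y_def)
  next
    case (Suc i)
    then show ?case using step[of i] unfolding lifts_def by simp
  qed
  have "compatible Y y"
    by (rule compatible_familyI[OF Y]) (use good step lifts_def in auto)
  moreover have "y 0 = y0"
    by (simp add: y_def)
  ultimately show ?thesis
    using that good by blast
qed

lemma future_open_track_lift:
  assumes Y: "presheaf C Y" and fm: "psh_map C Y X f" and fo: "future_open C Y X f"
    and \<alpha>: "psh_map C Tr X \<alpha>" and y0: "y0 \<in> Elt Y (Wo 0)" and f0: "f (Wo 0) y0 = \<alpha> (Wo 0) (tgen 0)"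
  obtains \<beta> where "psh_map C Tr Y \<beta>" "\<beta> (Wo 0) (tgen 0) = y0"
    "\<And>U c. c \<in> Elt Tr U \<Longrightarrow> f U (\<beta> U c) = \<alpha> U c"
proof -
  define x where "x i = \<alpha> (Wo i) (tgen i)" for i
  have x: "compatible X x"
    unfolding x_def by (rule compatible_psh_map_tgen[OF \<alpha>])
  obtain y where y: "compatible Y y" "y 0 = y0" and y_over: "\<And>i. i \<le> n \<Longrightarrow> f (Wo i) (y i) = x i"
    using future_open_lift[OF Y fm fo x y0] f0 unfolding x_def by blast
  show ?thesis
  proof (rule that[of "track_map Y y"])
    show "psh_map C Tr Y (track_map Y y)"
      by (rule psh_map_track_map[OF Y y(1)])
    show "track_map Y y (Wo 0) (tgen 0) = y0"
      using track_map_tgen[OF Y y(1), of 0] y(2) by simp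
    show "f U (track_map Y y U c) = \<alpha> U c" if "c \<in> Elt Tr U" for U c
      using track_map_over[OF fm \<alpha> Y y(1) _ that] y_over x_def by simp
  qed
qed

end

locale glue_ctx = small_category +
  fixes A :: "('o, 'm, 'a) psh" and B :: "('o, 'm, 'b) psh" and W :: 'o and a :: 'a and b :: 'b
  assumes A: "presheaf C A" and B: "presheaf C B" and W: "W \<in> Ob C"
    and a: "a \<in> Elt A W" and b: "b \<in> Elt B W"
begin

abbreviation "gcar U \<equiv> Inl ` Elt A U \<union> Inr ` Elt B U"
abbreviation "gstep \<equiv> glue_step C A B W a b"
abbreviation "gcls \<equiv> glue_cls C A B W a b"
abbreviation "Gl \<equiv> glue C A B W a b"

lemma gcls_equivclp: "gcls U p = {q. equivclp (gstep U) p q}"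
  by (simp add: glue_cls_def symclp_rtranclp_eq_equivclp)

lemma gcls_self: "p \<in> gcls U p"
  by (simp add: gcls_equivclp)

lemma gcls_eq: "q \<in> gcls U p \<Longrightarrow> gcls U q = gcls U p"
  by (simp add: gcls_equivclp equivclp_classes_eq)

lemma gcls_invariant: "(\<And>u v. gstep U u v \<Longrightarrow> g u = g v) \<Longrightarrow> q \<in> gcls U p \<Longrightarrow> g q = g p"
  unfolding gcls_equivclp by (blast intro: equivclp_invariant)

lemma Elt_glue: "Elt Gl U = gcls U ` gcar U"
  unfolding glue_def by simp

lemma gcls_Inl_eq_Inr: "gcls W (Inl a) = gcls W (Inr b)"
proof -
  have "gstep W (Inl a) (Inr b)"
    unfolding glue_step_def using W a b presheaf_act_id[OF A W a] presheaf_act_id[OF B W b]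
    by (intro bexI[of _ "Idm C W"]) auto
  then show ?thesis
    by (intro gcls_eq[symmetric]) (auto simp: gcls_equivclp)
qed

lemma Act_glue_gcls:
  assumes \<phi>: "\<phi> \<in> Mor C"
  shows "Act Gl \<phi> (gcls (Cd C \<phi>) p) = gcls (Dm C \<phi>) (map_sum (Act A \<phi>) (Act B \<phi>) p)"
proof -
  define h where "h = map_sum (Act A \<phi>) (Act B \<phi>)"
  define p' where "p' = (SOME q. q \<in> gcls (Cd C \<phi>) p)"
  have "p' \<in> gcls (Cd C \<phi>) p"
    unfolding p'_def by (rule someI, rule gcls_self)
  moreover have hstep: "gstep (Dm C \<phi>) (h u) (h v)" if "gstep (Cd C \<phi>) u v" for u v
  proof -
    from that obtain \<psi> where \<psi>: "\<psi> \<in> Mor C" "Dm C \<psi> = Cd C \<phi>" "Cd C \<psi> = W"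
      and u: "u = Inl (Act A \<psi> a)" and v: "v = Inr (Act B \<psi> b)"
      unfolding glue_step_def by blast
    have "Act A \<phi> (Act A \<psi> a) = Act A (Cmp C \<psi> \<phi>) a"
      using presheaf_act_comp[OF A \<phi> \<psi>(1)] \<psi> a by simp
    moreover have "Act B \<phi> (Act B \<psi> b) = Act B (Cmp C \<psi> \<phi>) b"
      using presheaf_act_comp[OF B \<phi> \<psi>(1)] \<psi> b by simp
    ultimately show ?thesis
      unfolding glue_step_def h_def u v using \<psi> \<phi> by (intro bexI[of _ "Cmp C \<psi> \<phi>"]) auto
  qed
  ultimately have "h p' \<in> gcls (Dm C \<phi>) (h p)"
    using equivclp_map[of "gstep (Cd C \<phi>)" "gstep (Dm C \<phi>)" h, OF hstep] by (simp add: gcls_equivclp)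
  then have "gcls (Dm C \<phi>) (h p') = gcls (Dm C \<phi>) (h p)"
    by (rule gcls_eq)
  then show ?thesis
    unfolding glue_def h_def p'_def by simp
qed

lemma gcar_act: "\<phi> \<in> Mor C \<Longrightarrow> p \<in> gcar (Cd C \<phi>) \<Longrightarrow> map_sum (Act A \<phi>) (Act B \<phi>) p \<in> gcar (Dm C \<phi>)"
  using presheaf_act_elt[OF A] presheaf_act_elt[OF B] by auto

lemma psh_map_glue_Inr: "psh_map C B Gl (\<lambda>U x. gcls U (Inr x))"
  unfolding psh_map_def using Act_glue_gcls Elt_glue by auto

definition glue_map :: "('o \<Rightarrow> 'a \<Rightarrow> 'z) \<Rightarrow> ('o \<Rightarrow> 'b \<Rightarrow> 'z) \<Rightarrow> 'o \<Rightarrow> ('a + 'b) set \<Rightarrow> 'z" where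
  "glue_map ga gb = (\<lambda>U c. case_sum (ga U) (gb U) (SOME p. p \<in> c))"

lemma glue_map_gcls:
  assumes ga: "psh_map C A Z ga" and gb: "psh_map C B Z gb"
    and ab: "ga W a = gb W b" and p: "p \<in> gcar U"
  shows "glue_map ga gb U (gcls U p) = case_sum (ga U) (gb U) p"
proof -
  define g where "g = case_sum (ga U) (gb U)"
  have "g u = g v" if "gstep U u v" for u v
  proof -
    from that obtain \<psi> where \<psi>: "\<psi> \<in> Mor C" "Dm C \<psi> = U" "Cd C \<psi> = W"
      and u: "u = Inl (Act A \<psi> a)" and v: "v = Inr (Act B \<psi> b)"
      unfolding glue_step_def by blast
    have "ga U (Act A \<psi> a) = Act Z \<psi> (ga W a)"
      using psh_map_natural[OF ga \<psi>(1)] \<psi> a by simp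
    moreover have "gb U (Act B \<psi> b) = Act Z \<psi> (gb W b)"
      using psh_map_natural[OF gb \<psi>(1)] \<psi> b by simp
    ultimately show ?thesis
      unfolding g_def u v using ab by simp
  qed
  moreover have "(SOME q. q \<in> gcls U p) \<in> gcls U p"
    by (rule someI, rule gcls_self)
  ultimately have "g (SOME q. q \<in> gcls U p) = g p"
    using gcls_invariant[of U g] by blast
  then show ?thesis
    unfolding glue_map_def g_def by simp
qed

lemma psh_map_glue_map:
  assumes ga: "psh_map C A Z ga" and gb: "psh_map C B Z gb" and ab: "ga W a = gb W b"
  shows "psh_map C Gl Z (glue_map ga gb)"
  unfolding psh_map_def
proof (intro conjI ballI)
  fix U c assume U: "U \<in> Ob C" and "c \<in> Elt Gl U"
  then obtain p where "c = gcls U p" "p \<in> gcar U"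
    unfolding Elt_glue by auto
  then show "glue_map ga gb U c \<in> Elt Z U"
    using glue_map_gcls[OF ga gb ab] psh_map_elt[OF ga U] psh_map_elt[OF gb U] by auto
next
  fix \<phi> c assume \<phi>: "\<phi> \<in> Mor C" and "c \<in> Elt Gl (Cd C \<phi>)"
  then obtain p where c: "c = gcls (Cd C \<phi>) p" "p \<in> gcar (Cd C \<phi>)"
    unfolding Elt_glue by auto
  have "glue_map ga gb (Dm C \<phi>) (Act Gl \<phi> c) =
      case_sum (ga (Dm C \<phi>)) (gb (Dm C \<phi>)) (map_sum (Act A \<phi>) (Act B \<phi>) p)"
    using Act_glue_gcls[OF \<phi>] c glue_map_gcls[OF ga gb ab gcar_act[OF \<phi> c(2)]] by simp
  also have "\<dots> = Act Z \<phi> (case_sum (ga (Cd C \<phi>)) (gb (Cd C \<phi>)) p)"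
    using c(2) psh_map_natural[OF ga \<phi>] psh_map_natural[OF gb \<phi>] by auto
  also have "\<dots> = Act Z \<phi> (glue_map ga gb (Cd C \<phi>) c)"
    using glue_map_gcls[OF ga gb ab c(2)] c(1) by simp
  finally show "glue_map ga gb (Dm C \<phi>) (Act Gl \<phi> c) = Act Z \<phi> (glue_map ga gb (Cd C \<phi>) c)" .
qed

end

locale track_pair = t1: cat_path C ws1 Wo1 Wm1 + t2: cat_path C ws2 Wo2 Wm2
  for C ws1 Wo1 Wm1 ws2 Wo2 Wm2 +
  assumes junction: "Wo1 (length ws1) = Wo2 0"

sublocale track_pair \<subseteq> glue_ctx C "track C ws1 Wo1 Wm1" "track C ws2 Wo2 Wm2" "Wo1 (length ws1)"
    "track_top C ws1 Wo1 Wm1" "track_bot C ws2 Wo2 Wm2"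
  using t1.tgen_elt[of "length ws1"] t2.tgen_elt[of 0] junction
  by unfold_locales
    (simp_all add: t1.category t1.presheaf_track t2.presheaf_track track_top_def track_bot_def)

lemma track_pairI:
  "dcategory C \<Longrightarrow> path C ws1 Wo1 Wm1 \<Longrightarrow> path C ws2 Wo2 Wm2 \<Longrightarrow> Wo1 (length ws1) = Wo2 0 \<Longrightarrow>
    track_pair C ws1 Wo1 Wm1 ws2 Wo2 Wm2"
  by (simp add: track_pair_def track_pair_axioms_def cat_pathI)

lemma (in track_pair) future_open_extend:
  assumes Y: "presheaf C Y" and fm: "psh_map C Y X f" and fo: "future_open C Y X f"
    and \<gamma>: "psh_map C (track C ws1 Wo1 Wm1) Y \<gamma>" and \<alpha>: "psh_map C Gl X \<alpha>"
    and over: "\<forall>U\<in>Ob C. \<forall>u\<in>Elt (track C ws1 Wo1 Wm1) U. \<alpha> U (gcls U (Inl u)) = f U (\<gamma> U u)"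
  obtains \<beta> where "psh_map C Gl Y \<beta>"
    "\<forall>U\<in>Ob C. \<forall>u\<in>Elt (track C ws1 Wo1 Wm1) U. \<beta> U (gcls U (Inl u)) = \<gamma> U u"
    "\<forall>U\<in>Ob C. \<forall>z\<in>Elt Gl U. f U (\<beta> U z) = \<alpha> U z"
proof -
  let ?W = "Wo1 (length ws1)" and ?a = "track_top C ws1 Wo1 Wm1" and ?b = "track_bot C ws2 Wo2 Wm2"
  define \<alpha>2 where "\<alpha>2 U v = \<alpha> U (gcls U (Inr v))" for U v
  have \<alpha>2: "psh_map C (track C ws2 Wo2 Wm2) X \<alpha>2"
    unfolding \<alpha>2_def by (rule t1.psh_map_comp[OF psh_map_glue_Inr \<alpha>])
  have y0: "\<gamma> ?W ?a \<in> Elt Y (Wo2 0)"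
    using psh_map_elt[OF \<gamma> W a] junction by simp
  have "f ?W (\<gamma> ?W ?a) = \<alpha> ?W (gcls ?W (Inr ?b))"
    using over W a gcls_Inl_eq_Inr[symmetric] by simp
  then have "f (Wo2 0) (\<gamma> ?W ?a) = \<alpha>2 (Wo2 0) (t2.tgen 0)"
    unfolding \<alpha>2_def track_bot_def using junction by simp
  then obtain \<delta> where \<delta>: "psh_map C (track C ws2 Wo2 Wm2) Y \<delta>" "\<delta> (Wo2 0) (t2.tgen 0) = \<gamma> ?W ?a"
    and \<delta>_over: "\<And>U v. v \<in> Elt (track C ws2 Wo2 Wm2) U \<Longrightarrow> f U (\<delta> U v) = \<alpha>2 U v"
    using t2.future_open_track_lift[OF Y fm fo \<alpha>2 y0] by blast
  have ab: "\<gamma> ?W ?a = \<delta> ?W ?b"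
    using \<delta>(2) junction unfolding track_bot_def by simp
  show ?thesis
  proof (rule that[of "glue_map \<gamma> \<delta>"]; (intro ballI)?)
    show "psh_map C Gl Y (glue_map \<gamma> \<delta>)"
      by (rule psh_map_glue_map[OF \<gamma> \<delta>(1) ab])
    show "glue_map \<gamma> \<delta> U (gcls U (Inl u)) = \<gamma> U u" if "u \<in> Elt (track C ws1 Wo1 Wm1) U" for U u
      using glue_map_gcls[OF \<gamma> \<delta>(1) ab, of "Inl u" U] that by simp
  next
    fix U z assume U: "U \<in> Ob C" and "z \<in> Elt Gl U"
    then obtain p where z: "z = gcls U p" and p: "p \<in> gcar U"
      unfolding Elt_glue by auto
    then show "f U (glue_map \<gamma> \<delta> U z) = \<alpha> U z"
      using glue_map_gcls[OF \<gamma> \<delta>(1) ab p] over U \<delta>_over \<alpha>2_def by (cases p) auto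
  qed
qed

lemma elcat_simps [simp]:
  "(U, x) \<in> Ob (elcat C X) \<longleftrightarrow> U \<in> Ob C \<and> x \<in> Elt X U"
  "(\<phi>, x) \<in> Mor (elcat C X) \<longleftrightarrow> \<phi> \<in> Mor C \<and> x \<in> Elt X (Cd C \<phi>)"
  "Dm (elcat C X) (\<phi>, x) = (Dm C \<phi>, Act X \<phi> x)"
  "Cd (elcat C X) (\<phi>, x) = (Cd C \<phi>, x)"
  "Idm (elcat C X) (U, x) = (Idm C U, x)"
  "Cmp (elcat C X) (\<psi>, x') (\<phi>, x) = (Cmp C \<psi> \<phi>, x')"
  "(\<phi>, x) \<in> Fwd (elcat C X) \<longleftrightarrow> \<phi> \<in> Fwd C \<and> x \<in> Elt X (Cd C \<phi>)"
  "(\<phi>, x) \<in> Bwd (elcat C X) \<longleftrightarrow> \<phi> \<in> Bwd C \<and> x \<in> Elt X (Cd C \<phi>)"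
  "Ef_ob f (U, y) = (U, f U y)"
  "Ef_mor C f (\<phi>, y) = (\<phi>, f (Cd C \<phi>) y)"
  unfolding elcat_def Ef_ob_def Ef_mor_def by auto

lemma path_elcatI:
  assumes "path C ws Wo Wm" and "compatible_family C ws Wo Wm X x"
  shows "path (elcat C X) ws (\<lambda>i. (Wo i, x i)) (\<lambda>m. (Wm m, x (snd m)))"
  using assms unfolding path_def dfunctor_def compatible_family_def
  by (auto simp: lin_mor_iff split: prod.splits)

lemma path_elcat_objD:
  assumes "path (elcat C X) ws Ao Am" and "i \<le> length ws"
  shows "fst (Ao i) \<in> Ob C \<and> snd (Ao i) \<in> Elt X (fst (Ao i))"
proof -
  have "Ao i \<in> Ob (elcat C X)"
    using assms unfolding path_def dfunctor_def by simp
  then show ?thesis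
    by (cases "Ao i") simp
qed

lemma path_elcat_morD:
  assumes "path (elcat C X) ws Ao Am" and "m \<in> lin_mor ws"
  shows "fst (Am m) \<in> Mor C \<and> Dm C (fst (Am m)) = fst (Ao (fst m)) \<and>
    Cd C (fst (Am m)) = fst (Ao (snd m)) \<and> snd (Am m) = snd (Ao (snd m)) \<and>
    Act X (fst (Am m)) (snd (Ao (snd m))) = snd (Ao (fst m))"
proof -
  obtain \<phi> x where Am: "Am m = (\<phi>, x)"
    by (cases "Am m")
  have "Am m \<in> Mor (elcat C X) \<and> Dm (elcat C X) (Am m) = Ao (fst m) \<and> Cd (elcat C X) (Am m) = Ao (snd m)"
    using assms unfolding path_def dfunctor_def by simp
  then have "\<phi> \<in> Mor C" "Ao (fst m) = (Dm C \<phi>, Act X \<phi> x)" "Ao (snd m) = (Cd C \<phi>, x)"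
    using Am by auto
  then show ?thesis
    using Am by simp
qed

lemma compatible_family_elcat_snd:
  "path (elcat C X) ws Ao Am \<Longrightarrow>
    compatible_family C ws (\<lambda>i. fst (Ao i)) (\<lambda>m. fst (Am m)) X (\<lambda>i. snd (Ao i))"
  unfolding compatible_family_def using path_elcat_objD path_elcat_morD by fastforce

lemma path_elcat_fst:
  assumes P: "path (elcat C X) ws Ao Am"
  shows "path C ws (\<lambda>i. fst (Ao i)) (\<lambda>m. fst (Am m))"
  unfolding path_def dfunctor_def
proof (intro conjI ballI impI)
  fix U assume "U \<in> Ob (Lin ws)"
  then show "fst (Ao U) \<in> Ob C"
    using path_elcat_objD[OF P] by simp
next
  fix m assume "m \<in> Mor (Lin ws)"
  with path_elcat_morD[OF P] show "fst (Am m) \<in> Mor C" "Dm C (fst (Am m)) = fst (Ao (Dm (Lin ws) m))"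
    "Cd C (fst (Am m)) = fst (Ao (Cd (Lin ws) m))"
    by simp_all
next
  fix U assume "U \<in> Ob (Lin ws)"
  then have "Am (U, U) = Idm (elcat C X) (Ao U)"
    using P unfolding path_def dfunctor_def by simp
  then show "fst (Am (Idm (Lin ws) U)) = Idm C (fst (Ao U))"
    by (cases "Ao U") simp
next
  fix m1 m2 assume "m1 \<in> Mor (Lin ws)" "m2 \<in> Mor (Lin ws)" "Cd (Lin ws) m1 = Dm (Lin ws) m2"
  then have "Am (Cmp (Lin ws) m2 m1) = Cmp (elcat C X) (Am m2) (Am m1)"
    using P unfolding path_def dfunctor_def by blast
  then show "fst (Am (Cmp (Lin ws) m2 m1)) = Cmp C (fst (Am m2)) (fst (Am m1))"
    by (cases "Am m1", cases "Am m2") simp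
next
  fix m assume "m \<in> Fwd (Lin ws)"
  then have "Am m \<in> Fwd (elcat C X)"
    using P unfolding path_def dfunctor_def by blast
  then show "fst (Am m) \<in> Fwd C"
    by (cases "Am m") simp
next
  fix m assume "m \<in> Bwd (Lin ws)"
  then have "Am m \<in> Bwd (elcat C X)"
    using P unfolding path_def dfunctor_def by blast
  then show "fst (Am m) \<in> Bwd C"
    by (cases "Am m") simp
qed

lemma future_open_imp_path_lifting:
  assumes dc: "dcategory C" and Y: "presheaf C Y" and fm: "psh_map C Y X f"
    and fo: "future_open C Y X f"
  shows "path_lifting C Y X f"
  unfolding path_lifting_def
proof (intro allI impI ballI)
  fix ws Ao Am y0
  assume P: "path (elcat C X) ws Ao Am" and y0: "y0 \<in> Ob (elcat C Y)" and e0: "Ef_ob f y0 = Ao 0"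
  define Wo where "Wo = (\<lambda>i. fst (Ao i))"
  define Wm where "Wm = (\<lambda>m. fst (Am m))"
  define x where "x = (\<lambda>i. snd (Ao i))"
  have x: "compatible_family C ws Wo Wm X x"
    using compatible_family_elcat_snd[OF P] unfolding Wo_def Wm_def x_def .
  interpret cat_path C ws Wo Wm
    using cat_pathI[OF dc path_elcat_fst[OF P]] unfolding Wo_def Wm_def .
  obtain y0' where y0': "y0 = (Wo 0, y0')" "y0' \<in> Elt Y (Wo 0)" "f (Wo 0) y0' = x 0"
    using y0 e0 unfolding Wo_def x_def by (cases y0, cases "Ao 0") auto
  obtain y where y: "compatible Y y" "y 0 = y0'" and y_over: "\<And>i. i \<le> n \<Longrightarrow> f (Wo i) (y i) = x i"
    using future_open_lift[OF Y fm fo x y0'(2,3)] by blast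
  show "\<exists>Bo Bm. path (elcat C Y) ws Bo Bm \<and> Bo 0 = y0 \<and> (\<forall>i\<in>Ob (Lin ws). Ef_ob f (Bo i) = Ao i) \<and>
      (\<forall>m\<in>Mor (Lin ws). Ef_mor C f (Bm m) = Am m)"
  proof (intro exI[of _ "\<lambda>i. (Wo i, y i)"] exI[of _ "\<lambda>m. (Wm m, y (snd m))"] conjI ballI)
    show "path (elcat C Y) ws (\<lambda>i. (Wo i, y i)) (\<lambda>m. (Wm m, y (snd m)))"
      by (rule path_elcatI[OF path y(1)])
    show "(Wo 0, y 0) = y0"
      using y0' y(2) by simp
  next
    fix i assume "i \<in> Ob (Lin ws)"
    then show "Ef_ob f (Wo i, y i) = Ao i"
      using y_over unfolding Wo_def x_def by simp
  next
    fix m assume "m \<in> Mor (Lin ws)"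
    then obtain i j where m: "m = (i, j)" "(i, j) \<in> lin_mor ws"
      by (cases m) auto
    then show "Ef_mor C f (Wm m, y (snd m)) = Am m"
      using y_over[OF lin_mor_cod_le[OF m(2)]] path_elcat_morD[OF P m(2)] cod_Wm[OF m(2)]
      unfolding m(1) Wm_def Wo_def x_def by (simp add: prod_eq_iff)
  qed
qed

text \<open>The one-letter path \<open>S\<close> along a formorphism \<open>\<phi>\<close>, and the compatible family along it
  generated by \<open>x \<in> X[Cd \<phi>]\<close>; the values of \<open>arrow_path_mor\<close> off \<open>lin_mor [S]\<close> are irrelevant.\<close>

definition arrow_path_ob :: "('o, 'm) dcat \<Rightarrow> 'm \<Rightarrow> nat \<Rightarrow> 'o" where
  "arrow_path_ob C \<phi> i = (if i = 0 then Dm C \<phi> else Cd C \<phi>)"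

definition arrow_path_mor :: "('o, 'm) dcat \<Rightarrow> 'm \<Rightarrow> nat \<times> nat \<Rightarrow> 'm" where
  "arrow_path_mor C \<phi> m = (if fst m = snd m then Idm C (arrow_path_ob C \<phi> (fst m)) else \<phi>)"

definition arrow_family :: "('o, 'm, 'e) psh \<Rightarrow> 'm \<Rightarrow> 'e \<Rightarrow> nat \<Rightarrow> 'e" where
  "arrow_family X \<phi> x i = (if i = 0 then Act X \<phi> x else x)"

lemma path_arrow:
  assumes dc: "dcategory C" and \<phi>: "\<phi> \<in> Fwd C"
  shows "path C [S] (arrow_path_ob C \<phi>) (arrow_path_mor C \<phi>)"
proof -
  interpret small_category C
    using dcategory_category[OF dc] by unfold_locales
  have \<phi>_mor: "\<phi> \<in> Mor C"
    using dcategory_Fwd_mor[OF dc \<phi>] .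
  have ids: "Idm C (Dm C \<phi>) \<in> Fwd C" "Idm C (Dm C \<phi>) \<in> Bwd C"
    "Idm C (Cd C \<phi>) \<in> Fwd C" "Idm C (Cd C \<phi>) \<in> Bwd C"
    using dcategory_id_Fwd_Bwd[OF dc] \<phi>_mor by simp_all
  have "{0..length [S]} = {0, 1 :: nat}"
    by auto
  moreover have "\<not> all_I [S] 0 1"
    unfolding all_I_def by auto
  ultimately show ?thesis
    unfolding path_def dfunctor_def Lin_simps lin_mor_S arrow_path_mor_def arrow_path_ob_def
    using \<phi> \<phi>_mor ids comp_id_left[of "Idm C (Dm C \<phi>)"] comp_id_left[of "Idm C (Cd C \<phi>)"]
    by (simp; auto)
qed

lemma compatible_family_arrow:
  assumes cat: "category C" and \<phi>: "\<phi> \<in> Mor C" and X: "presheaf C X" and x: "x \<in> Elt X (Cd C \<phi>)"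
  shows "compatible_family C [S] (arrow_path_ob C \<phi>) (arrow_path_mor C \<phi>) X (arrow_family X \<phi> x)"
proof -
  interpret small_category C
    by (rule small_category.intro[OF cat])
  show ?thesis
    unfolding compatible_family_def arrow_family_def arrow_path_mor_def arrow_path_ob_def
    using \<phi> x presheaf_act_elt[OF X \<phi> x] presheaf_act_id[OF X] by (auto simp: lin_mor_S le_Suc_eq)
qed

lemma path_lifting_imp_future_open:
  assumes dc: "dcategory C" and X: "presheaf C X" and pl: "path_lifting C Y X f"
  shows "future_open C Y X f"
  unfolding future_open_def
proof (intro ballI impI)
  fix \<phi> y x
  assume \<phi>: "\<phi> \<in> Fwd C" and y: "y \<in> Elt Y (Dm C \<phi>)" and x: "x \<in> Elt X (Cd C \<phi>)"
    and e: "Act X \<phi> x = f (Dm C \<phi>) y"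
  have \<phi>_mor: "\<phi> \<in> Mor C"
    using dcategory_Fwd_mor[OF dc \<phi>] .
  let ?Wo = "arrow_path_ob C \<phi>" and ?Wm = "arrow_path_mor C \<phi>" and ?x = "arrow_family X \<phi> x"
  have P: "path (elcat C X) [S] (\<lambda>i. (?Wo i, ?x i)) (\<lambda>m. (?Wm m, ?x (snd m)))"
    by (rule path_elcatI[OF path_arrow[OF dc \<phi>] compatible_family_arrow[OF dcategory_category[OF dc] \<phi>_mor X x]])
  have y0: "(Dm C \<phi>, y) \<in> Ob (elcat C Y)"
    using y \<phi>_mor dcategory_category[OF dc] unfolding category_def by simp
  have e0: "Ef_ob f (Dm C \<phi>, y) = (?Wo 0, ?x 0)"
    using e by (simp add: arrow_path_ob_def arrow_family_def)
  obtain Bo Bm where B: "path (elcat C Y) [S] Bo Bm" "Bo 0 = (Dm C \<phi>, y)"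
    and over: "\<forall>m\<in>Mor (Lin [S]). Ef_mor C f (Bm m) = (?Wm m, ?x (snd m))"
    using pl[unfolded path_lifting_def, rule_format, OF P y0 e0] by blast
  have m: "(0, 1) \<in> lin_mor [S]"
    by (simp add: lin_mor_S)
  obtain \<psi> y' where Bm: "Bm (0, 1) = (\<psi>, y')"
    by (cases "Bm (0, 1)")
  have "\<psi> = \<phi>" "f (Cd C \<phi>) y' = x"
    using over m Bm by (auto simp: arrow_path_mor_def arrow_family_def)
  moreover have "Bm (0, 1) \<in> Mor (elcat C Y) \<and> Dm (elcat C Y) (Bm (0, 1)) = Bo 0"
    using B(1) m unfolding path_def dfunctor_def by fastforce
  ultimately show "\<exists>y'\<in>Elt Y (Cd C \<phi>). Act Y \<phi> y' = y \<and> f (Cd C \<phi>) y' = x"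
    using Bm B(2) by auto
qed

lemma future_open_imp_track_lifting:
  assumes dc: "dcategory C" and Y: "presheaf C Y" and fm: "psh_map C Y X f"
    and fo: "future_open C Y X f"
  shows "track_lifting C Y X f"
  unfolding track_lifting_def
proof (intro allI impI ballI)
  fix ws Wo Wm \<alpha> y
  assume P: "path C ws Wo Wm" and \<alpha>: "psh_map C (track C ws Wo Wm) X \<alpha>"
    and y: "y \<in> Elt Y (Wo 0)" and e: "f (Wo 0) y = \<alpha> (Wo 0) (track_bot C ws Wo Wm)"
  interpret cat_path C ws Wo Wm
    by (rule cat_pathI[OF dc P])
  obtain \<beta> where "psh_map C Tr Y \<beta>" "\<beta> (Wo 0) (tgen 0) = y"
    "\<And>U c. c \<in> Elt Tr U \<Longrightarrow> f U (\<beta> U c) = \<alpha> U c"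
    using future_open_track_lift[OF Y fm fo \<alpha> y] e unfolding track_bot_def by blast
  then show "\<exists>\<beta>. psh_map C Tr Y \<beta> \<and> \<beta> (Wo 0) (track_bot C ws Wo Wm) = y \<and>
      (\<forall>U\<in>Ob C. \<forall>c\<in>Elt Tr U. f U (\<beta> U c) = \<alpha> U c)"
    unfolding track_bot_def by blast
qed

lemma track_lifting_imp_future_open:
  assumes dc: "dcategory C" and X: "presheaf C X" and tl: "track_lifting C Y X f"
  shows "future_open C Y X f"
  unfolding future_open_def
proof (intro ballI impI)
  fix \<phi> y x
  assume \<phi>: "\<phi> \<in> Fwd C" and y: "y \<in> Elt Y (Dm C \<phi>)" and x: "x \<in> Elt X (Cd C \<phi>)"
    and e: "Act X \<phi> x = f (Dm C \<phi>) y"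
  have \<phi>_mor: "\<phi> \<in> Mor C"
    using dcategory_Fwd_mor[OF dc \<phi>] .
  interpret cat_path C "[S]" "arrow_path_ob C \<phi>" "arrow_path_mor C \<phi>"
    by (rule cat_pathI[OF dc path_arrow[OF dc \<phi>]])
  have Wo: "arrow_path_ob C \<phi> 0 = Dm C \<phi>" "arrow_path_ob C \<phi> 1 = Cd C \<phi>"
    by (simp_all add: arrow_path_ob_def)
  have x_fam: "compatible X (arrow_family X \<phi> x)"
    by (rule compatible_family_arrow[OF category \<phi>_mor X x])
  define \<alpha> where "\<alpha> = track_map X (arrow_family X \<phi> x)"
  have \<alpha>: "psh_map C Tr X \<alpha>"
    unfolding \<alpha>_def by (rule psh_map_track_map[OF X x_fam])
  have \<alpha>_gen: "\<alpha> (arrow_path_ob C \<phi> i) (tgen i) = arrow_family X \<phi> x i" if "i \<le> 1" for i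
    unfolding \<alpha>_def using track_map_tgen[OF X x_fam] that by simp
  have y0: "y \<in> Elt Y (arrow_path_ob C \<phi> 0)"
    using y Wo by simp
  have e0: "f (arrow_path_ob C \<phi> 0) y = \<alpha> (arrow_path_ob C \<phi> 0) (tgen 0)"
    using \<alpha>_gen[of 0] e Wo by (simp add: arrow_family_def)
  obtain \<beta> where \<beta>: "psh_map C Tr Y \<beta>" "\<beta> (arrow_path_ob C \<phi> 0) (tgen 0) = y"
    and \<beta>_over: "\<forall>U\<in>Ob C. \<forall>c\<in>Elt Tr U. f U (\<beta> U c) = \<alpha> U c"
    using tl[unfolded track_lifting_def track_bot_def, rule_format, OF path \<alpha> y0 e0] by blast
  define y' where "y' = \<beta> (Cd C \<phi>) (tgen 1)"
  have gen1: "tgen 1 \<in> Elt Tr (Cd C \<phi>)"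
    using tgen_elt[of 1] Wo by simp
  have "y' \<in> Elt Y (Cd C \<phi>)"
    unfolding y'_def using psh_map_elt[OF \<beta>(1) _ gen1] \<phi>_mor by simp
  moreover have "f (Cd C \<phi>) y' = x"
    unfolding y'_def using \<beta>_over gen1 \<phi>_mor \<alpha>_gen[of 1] Wo by (simp add: arrow_family_def)
  moreover have step: "tstep (Dm C \<phi>) (0, Idm C (Dm C \<phi>)) (1, \<phi>)"
    unfolding tstep_iff using \<phi>_mor Wo by (auto simp: tcar_iff lin_mor_S arrow_path_mor_def)
  moreover have "Act Y \<phi> y' = y"
    using psh_map_track_tcls[OF \<beta>(1), of 1 \<phi> "Dm C \<phi>"] tcls_step[OF step] \<beta>(2) \<phi>_mor Wo
    unfolding y'_def by (simp add: tcar_iff)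
  ultimately show "\<exists>y'\<in>Elt Y (Cd C \<phi>). Act Y \<phi> y' = y \<and> f (Cd C \<phi>) y' = x"
    by blast
qed

lemma future_open_imp_track_extension:
  assumes dc: "dcategory C" and Y: "presheaf C Y" and fm: "psh_map C Y X f"
    and fo: "future_open C Y X f"
  shows "track_extension C Y X f"
  unfolding track_extension_def Let_def track_concat_def track_concat_j_def
proof (intro allI impI)
  fix ws1 Wo1 Wm1 ws2 Wo2 Wm2 \<gamma> \<alpha>
  assume P1: "path C ws1 Wo1 Wm1" and P2: "path C ws2 Wo2 Wm2" and junction: "Wo1 (length ws1) = Wo2 0"
  interpret track_pair C ws1 Wo1 Wm1 ws2 Wo2 Wm2
    by (rule track_pairI[OF dc P1 P2 junction])
  assume \<gamma>: "psh_map C (track C ws1 Wo1 Wm1) Y \<gamma>" and \<alpha>: "psh_map C Gl X \<alpha>"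
    and over: "\<forall>U\<in>Ob C. \<forall>u\<in>Elt (track C ws1 Wo1 Wm1) U. \<alpha> U (gcls U (Inl u)) = f U (\<gamma> U u)"
  obtain \<beta> where "psh_map C Gl Y \<beta>"
    "\<forall>U\<in>Ob C. \<forall>u\<in>Elt (track C ws1 Wo1 Wm1) U. \<beta> U (gcls U (Inl u)) = \<gamma> U u"
    "\<forall>U\<in>Ob C. \<forall>z\<in>Elt Gl U. f U (\<beta> U z) = \<alpha> U z"
    by (rule future_open_extend[OF Y fm fo \<gamma> \<alpha> over])
  then show "\<exists>\<beta>. psh_map C Gl Y \<beta> \<and>
      (\<forall>U\<in>Ob C. \<forall>u\<in>Elt (track C ws1 Wo1 Wm1) U. \<beta> U (gcls U (Inl u)) = \<gamma> U u) \<and>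
      (\<forall>U\<in>Ob C. \<forall>z\<in>Elt Gl U. f U (\<beta> U z) = \<alpha> U z)"
    by blast
qed

lemma path_Nil:
  assumes dc: "dcategory C" and U: "U \<in> Ob C"
  shows "path C [] (\<lambda>_. U) (\<lambda>_. Idm C U)"
proof -
  interpret small_category C
    using dcategory_category[OF dc] by unfold_locales
  show ?thesis
    unfolding path_def dfunctor_def Lin_simps lin_mor_Nil
    using U dcategory_id_Fwd_Bwd[OF dc U] comp_id_left[of "Idm C U"] by simp
qed

lemma track_extension_imp_track_lifting:
  assumes dc: "dcategory C" and Y: "presheaf C Y" and fm: "psh_map C Y X f"
    and te: "track_extension C Y X f"
  shows "track_lifting C Y X f"
  unfolding track_lifting_def
proof (intro allI impI ballI)
  fix ws Wo Wm \<alpha> y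
  assume P: "path C ws Wo Wm" and \<alpha>: "psh_map C (track C ws Wo Wm) X \<alpha>"
    and y: "y \<in> Elt Y (Wo 0)" and e: "f (Wo 0) y = \<alpha> (Wo 0) (track_bot C ws Wo Wm)"
  let ?U = "Wo 0"
  have P0: "path C [] (\<lambda>_. ?U) (\<lambda>_. Idm C ?U)"
    by (rule path_Nil[OF dc cat_path.Wo_ob[OF cat_pathI[OF dc P]]]) simp
  interpret track_pair C "[]" "\<lambda>_. ?U" "\<lambda>_. Idm C ?U" ws Wo Wm
    by (rule track_pairI[OF dc P0 P]) simp
  let ?\<Gamma> = "track C [] (\<lambda>_. ?U) (\<lambda>_. Idm C ?U)" and ?a = "track_top C [] (\<lambda>_. ?U) (\<lambda>_. Idm C ?U)"
    and ?b = "track_bot C ws Wo Wm"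
  have y_fam: "t1.compatible Y (\<lambda>_. y)"
    by (rule t1.compatible_familyI[OF Y]) (use y in simp_all)
  define \<gamma> where "\<gamma> = t1.track_map Y (\<lambda>_. y)"
  have \<gamma>: "psh_map C ?\<Gamma> Y \<gamma>"
    unfolding \<gamma>_def by (rule t1.psh_map_track_map[OF Y y_fam])
  have \<gamma>_top: "\<gamma> ?U ?a = y"
    using t1.track_map_tgen[OF Y y_fam, of 0] unfolding \<gamma>_def track_top_def by simp
  have f\<gamma>: "psh_map C ?\<Gamma> X (\<lambda>U u. f U (\<gamma> U u))"
    by (rule t1.psh_map_comp[OF \<gamma> fm])
  have ab: "f ?U (\<gamma> ?U ?a) = \<alpha> ?U ?b"
    using \<gamma>_top e by simp
  have over: "\<forall>U\<in>Ob C. \<forall>u\<in>Elt ?\<Gamma> U. glue_map (\<lambda>U u. f U (\<gamma> U u)) \<alpha> U (gcls U (Inl u)) = f U (\<gamma> U u)"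
    using glue_map_gcls[OF f\<gamma> \<alpha> ab] by simp
  obtain \<beta> where \<beta>: "psh_map C Gl Y \<beta>"
    and \<beta>_Inl: "\<forall>U\<in>Ob C. \<forall>u\<in>Elt ?\<Gamma> U. \<beta> U (gcls U (Inl u)) = \<gamma> U u"
    and \<beta>_over: "\<forall>U\<in>Ob C. \<forall>z\<in>Elt Gl U. f U (\<beta> U z) = glue_map (\<lambda>U u. f U (\<gamma> U u)) \<alpha> U z"
    using te[unfolded track_extension_def Let_def track_concat_def track_concat_j_def, rule_format,
        OF P0 P refl \<gamma> psh_map_glue_map[OF f\<gamma> \<alpha> ab] over[rule_format]] by blast
  show "\<exists>\<beta>. psh_map C (track C ws Wo Wm) Y \<beta> \<and> \<beta> ?U ?b = y \<and>
      (\<forall>U\<in>Ob C. \<forall>v\<in>Elt (track C ws Wo Wm) U. f U (\<beta> U v) = \<alpha> U v)"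
  proof (intro exI[of _ "\<lambda>U v. \<beta> U (gcls U (Inr v))"] conjI ballI)
    show "psh_map C (track C ws Wo Wm) Y (\<lambda>U v. \<beta> U (gcls U (Inr v)))"
      by (rule t1.psh_map_comp[OF psh_map_glue_Inr \<beta>])
    show "\<beta> ?U (gcls ?U (Inr ?b)) = y"
      using gcls_Inl_eq_Inr[symmetric] \<beta>_Inl t2.Wo_ob[of 0] a \<gamma>_top by simp
  next
    fix U v assume U: "U \<in> Ob C" and v: "v \<in> Elt (track C ws Wo Wm) U"
    then have "gcls U (Inr v) \<in> Elt Gl U"
      unfolding Elt_glue by blast
    then show "f U (\<beta> U (gcls U (Inr v))) = \<alpha> U v"
      using \<beta>_over U glue_map_gcls[OF f\<gamma> \<alpha> ab, of "Inr v" U] v by simp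
  qed
qed

theorem lemma12:
  fixes C :: "('o, 'm) dcat" and Y :: "('o, 'm, 'y) psh" and X :: "('o, 'm, 'x) psh"
    and f :: "'o \<Rightarrow> 'y \<Rightarrow> 'x"
  assumes "dcategory C" and "presheaf C Y" and "presheaf C X" and "psh_map C Y X f"
  shows "(future_open C Y X f \<longleftrightarrow> path_lifting C Y X f) \<and>
         (future_open C Y X f \<longleftrightarrow> track_lifting C Y X f) \<and>
         (future_open C Y X f \<longleftrightarrow> track_extension C Y X f)"
  using future_open_imp_path_lifting[OF assms(1,2,4)] path_lifting_imp_future_open[OF assms(1,3)]
    future_open_imp_track_lifting[OF assms(1,2,4)] track_lifting_imp_future_open[OF assms(1,3)]
    future_open_imp_track_extension[OF assms(1,2,4)] track_extension_imp_track_lifting[OF assms(1,2,4)]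
  by blast

end
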